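(* Consider the rank-one construction with $p_n$ even, $s_{n,j}=0$ for $0\le j<p_n/2$ and $s_{n,j}=1$ for $p_n/2\le j<p_n$, and assume $p_n/h_n\to\infty$. Let $0<\alpha<1$ and let $(\ell_n)$ be integers such that $\ell_n$ is a multiple of $h_n+1$ for every $n$ and $\ell_n=\alpha p_n/2+o(p_n)$. Then $U_T^{-\ell_nh_n}\to\alpha\Theta+(1-\alpha)\mathrm{Id}$ weakly as $n\to\infty$.
   Context: Rank-one construction: parameters $p_n\ge2$, $s_{n,i}\ge0$; $h_1=1$, $h_{n+1}=p_nh_n+\sum_is_{n,i}$; $T$ is the map obtained by cutting and stacking (at stage $n$ the tower of height $h_n$ is cut into $p_n$ equal columns, $s_{n,i}$ spacers put above column $i$, column $i+1$ stacked on column $i$), on a probability space. $U_Tf=f\circ T$ on $L^2$; $\Theta$ is the orthogonal projection onto the constant functions. *)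

theory Defs
  imports "HOL-Probability.Probability" "HOL-Library.Landau_Symbols"
begin

text \<open>Heights of the rank-one towers (stages indexed from 0, so that
  h 0 = 1 plays the role of h_1 in the paper).\<close>
fun rk1_height :: "(nat \<Rightarrow> nat) \<Rightarrow> (nat \<Rightarrow> nat \<Rightarrow> nat) \<Rightarrow> nat \<Rightarrow> nat" where
  "rk1_height p s 0 = 1"
| "rk1_height p s (Suc n) = p n * rk1_height p s n + (\<Sum>i<p n. s n i)"

definition ipow :: "('a \<Rightarrow> 'a) \<Rightarrow> ('a \<Rightarrow> 'a) \<Rightarrow> int \<Rightarrow> 'a \<Rightarrow> 'a" where
  "ipow T Tinv k = (if k \<ge> 0 then T ^^ nat k else Tinv ^^ nat (- k))"

text \<open>(M, T) is an invertible measure-preserving system on a probability space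
  realising the rank-one cutting-and-stacking construction with parameters p, s:
  B n is the base of the n-th tower (levels T^k(B n), k < h n), C n i the i-th column
  (i < p n); column i, raised by h n plus the s n i spacers above it, is column i+1;
  the base of tower n+1 is column 0 of tower n; and the towers generate the
  measurable sets (every measurable set is approximated by unions of levels).\<close>
definition rank_one_system ::
  "'a measure \<Rightarrow> ('a \<Rightarrow> 'a) \<Rightarrow> ('a \<Rightarrow> 'a) \<Rightarrow> (nat \<Rightarrow> nat) \<Rightarrow> (nat \<Rightarrow> nat \<Rightarrow> nat)
     \<Rightarrow> (nat \<Rightarrow> 'a set) \<Rightarrow> (nat \<Rightarrow> nat \<Rightarrow> 'a set) \<Rightarrow> bool" where
  "rank_one_system M T Tinv p s B C \<longleftrightarrow>
     prob_space M \<and>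
     T \<in> measurable M M \<and> Tinv \<in> measurable M M \<and>
     (\<forall>x\<in>space M. Tinv (T x) = x \<and> T (Tinv x) = x) \<and>
     distr M M T = M \<and>
     (\<forall>n. p n \<ge> 2) \<and>
     (\<forall>n. B n \<in> sets M) \<and>
     (\<forall>n i. i < p n \<longrightarrow> C n i \<in> sets M) \<and>
     (\<forall>n. B n = (\<Union>i<p n. C n i)) \<and>
     (\<forall>n i j. i < p n \<longrightarrow> j < p n \<longrightarrow> i \<noteq> j \<longrightarrow> C n i \<inter> C n j = {}) \<and>
     (\<forall>n k j. k < rk1_height p s n \<longrightarrow> j < rk1_height p s n \<longrightarrow> k \<noteq> j \<longrightarrow>
         (T ^^ k) ` B n \<inter> (T ^^ j) ` B n = {}) \<and>
     (\<forall>n i. Suc i < p n \<longrightarrow>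
         (T ^^ (rk1_height p s n + s n i)) ` C n i = C n (Suc i)) \<and>
     (\<forall>n. B (Suc n) = C n 0) \<and>
     (\<forall>A\<in>sets M. \<forall>e>0. \<exists>n F. F \<subseteq> {..<rk1_height p s n} \<and>
         measure M ((A - (\<Union>k\<in>F. (T ^^ k) ` B n)) \<union> ((\<Union>k\<in>F. (T ^^ k) ` B n) - A)) < e)"

definition square_integrable :: "'a measure \<Rightarrow> ('a \<Rightarrow> complex) \<Rightarrow> bool" where
  "square_integrable M f \<longleftrightarrow> f \<in> borel_measurable M \<and> integrable M (\<lambda>x. (norm (f x))\<^sup>2)"

end

theory Submission
  imports Defs
begin

text \<open>Write \<open>h = h\<^sub>n\<close>, \<open>q = p\<^sub>n / 2\<close> and \<open>\<ell>\<^sub>n = m (h + 1)\<close>. Inside tower \<open>n + 2\<close>, the map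
  \<open>T\<^sup>\<ell>\<^sup>h\<close> carries a column of tower \<open>n\<close> onto another such column at the same height, except for
  the \<open>m (h + 1)\<close> columns that cross the block of spacers and the \<open>m h\<close> columns that wrap into the
  next column of tower \<open>n + 1\<close>; there the height becomes an affine function modulo \<open>h + 1\<close>
  resp. \<open>h\<close>, hence equidistributed. So for unions \<open>E\<close>, \<open>F\<close> of levels of tower \<open>n\<close>,
  \<open>\<mu>(T\<^sup>\<ell>\<^sup>h E \<inter> F) = (1 - 2mh/p) \<mu>(E \<inter> F) + (2mh/p) \<mu>(E) \<mu>(F) + o(1)\<close> with
  \<open>2mh/p \<rightarrow> \<alpha>\<close>. Approximating measurable sets by unions of levels and \<open>L\<^sup>2\<close> functions by simple
  functions yields the weak convergence.\<close>

section \<open>Counting residues\<close>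

lemma coprime_mult_add_mod_inj:
  fixes N a b :: nat
  assumes "coprime a N" and "d < N" and "d' < N"
    and "(d * a + b) mod N = (d' * a + b) mod N"
  shows "d = d'"
proof -
  have "int ((d * a + b) mod N) = int ((d' * a + b) mod N)" using assms(4) by simp
  then have "(int d * int a + int b) mod int N = (int d' * int a + int b) mod int N"
    by (simp add: zmod_int)
  then have "int N dvd (int d - int d') * int a"
    by (simp add: mod_eq_dvd_iff algebra_simps)
  moreover have "coprime (int N) (int a)" using assms(1) by (simp add: coprime_commute)
  ultimately have "int N dvd int d - int d'" using coprime_dvd_mult_left_iff by blast
  moreover have "\<bar>int d - int d'\<bar> < int N" using assms(2,3) by simp
  ultimately have "int d - int d' = 0" using dvd_imp_le_int[of "int d - int d'" "int N"] by linarith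
  then show ?thesis by simp
qed

lemma card_mult_add_mod_in:
  fixes N a b :: nat
  assumes cop: "coprime a N" and J: "J \<subseteq> {..<N}"
  shows "card {d. d < N \<and> (d * a + b) mod N \<in> J} = card J"
proof -
  let ?f = "\<lambda>d. (d * a + b) mod N"
  have inj: "inj_on ?f {..<N}"
    by (rule inj_onI) (use coprime_mult_add_mod_inj[OF cop] in blast)
  have "?f ` {..<N} \<subseteq> {..<N}"
  proof
    fix y assume "y \<in> ?f ` {..<N}"
    then obtain d where "d < N" "y = ?f d" by blast
    then show "y \<in> {..<N}" by simp
  qed
  then have "?f ` {..<N} = {..<N}"
    using card_image[OF inj] by (intro card_subset_eq) auto
  then have "J = ?f ` {d. d < N \<and> ?f d \<in> J}" using J by auto
  also have "card \<dots> = card {d. d < N \<and> ?f d \<in> J}"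
    by (rule card_image, rule inj_on_subset[OF inj]) auto
  finally show ?thesis by simp
qed

lemma card_mult_add_mod_in_periods:
  fixes N a b m :: nat
  assumes cop: "coprime a N" and J: "J \<subseteq> {..<N}"
  shows "card {d. d < m * N \<and> (d * a + b) mod N \<in> J} = m * card J"
proof (induction m)
  case (Suc m)
  let ?P = "\<lambda>d. (d * a + b) mod N \<in> J"
  have periodic: "?P (m * N + d) \<longleftrightarrow> ?P d" for d
  proof -
    have "(m * N + d) * a + b = (d * a + b) + (m * a) * N" by (simp add: algebra_simps)
    then show ?thesis by (metis mod_mult_self1)
  qed
  have split: "{d. d < Suc m * N \<and> ?P d}
      = {d. d < m * N \<and> ?P d} \<union> (\<lambda>d. m * N + d) ` {d. d < N \<and> ?P d}"
  proof (intro equalityI subsetI)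
    fix x assume x: "x \<in> {d. d < Suc m * N \<and> ?P d}"
    show "x \<in> {d. d < m * N \<and> ?P d} \<union> (\<lambda>d. m * N + d) ` {d. d < N \<and> ?P d}"
    proof (cases "x < m * N")
      case False
      then have "x = m * N + (x - m * N)" "x - m * N < N" using x by auto
      then show ?thesis using x periodic[of "x - m * N"]
          by (auto intro!: image_eqI[where x="x - m * N"])
    qed (use x in simp)
  qed (use periodic in auto)
  have "card {d. d < Suc m * N \<and> ?P d}
      = card {d. d < m * N \<and> ?P d} + card ((\<lambda>d. m * N + d) ` {d. d < N \<and> ?P d})"
    unfolding split by (rule card_Un_disjoint) auto
  also have "card ((\<lambda>d. m * N + d) ` {d. d < N \<and> ?P d}) = card J"
    using card_mult_add_mod_in[OF cop J] by (simp add: card_image inj_on_def)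
  finally show ?case using Suc by simp
qed simp

lemma card_shifted_interval:
  "card {i::nat. a \<le> i \<and> i < a + L \<and> Q i} = card {d. d < L \<and> Q (a + d)}"
proof -
  have "{i. a \<le> i \<and> i < a + L \<and> Q i} = (\<lambda>d. a + d) ` {d. d < L \<and> Q (a + d)}"
  proof (intro equalityI subsetI)
    fix i assume "i \<in> {i. a \<le> i \<and> i < a + L \<and> Q i}"
    then show "i \<in> (\<lambda>d. a + d) ` {d. d < L \<and> Q (a + d)}"
      by (auto intro!: image_eqI[where x="i - a"])
  qed auto
  then show ?thesis by (simp add: card_image)
qed

section \<open>Correlations of square-integrable functions\<close>

definition measure_preserving :: "'a measure \<Rightarrow> ('a \<Rightarrow> 'a) \<Rightarrow> bool" where
  "measure_preserving M S \<longleftrightarrow> S \<in> measurable M M \<and> distr M M S = M"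

definition correlation :: "'a measure \<Rightarrow> ('a \<Rightarrow> 'a) \<Rightarrow> ('a \<Rightarrow> complex) \<Rightarrow> ('a \<Rightarrow> complex) \<Rightarrow> complex" where
  "correlation M S u v = (\<integral>x. u (S x) * cnj (v x) \<partial>M)"

lemma mult_le_weighted_squares: "(t::real) > 0 \<Longrightarrow> a * b \<le> (t * a\<^sup>2 + b\<^sup>2 / t) / 2"
proof -
  assume t: "t > 0"
  have "0 \<le> (t * a - b)\<^sup>2 / t" using t by simp
  also have "(t * a - b)\<^sup>2 / t = t * a\<^sup>2 - 2 * a * b + b\<^sup>2 / t"
    using t by (simp add: power2_eq_square field_simps)
  finally show ?thesis by simp
qed

lemma borel_measurable_cnj [measurable]:
  "v \<in> borel_measurable M \<Longrightarrow> (\<lambda>x. cnj (v x)) \<in> borel_measurable M"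
  by (rule borel_measurable_continuous_on[OF continuous_on_cnj[OF continuous_on_id]])

lemma cnj_indicator [simp]: "cnj (indicator X x :: complex) = indicator X x"
  by (simp add: indicator_def)

context prob_space
begin

abbreviation L2_norm_sq :: "('a \<Rightarrow> complex) \<Rightarrow> real" where
  "L2_norm_sq u \<equiv> \<integral>x. (norm (u x))\<^sup>2 \<partial>M"

lemma measure_preserving_id: "measure_preserving M (\<lambda>x. x)"
  unfolding measure_preserving_def using distr_id2[of M] by (simp add: id_def)

lemma square_integrable_const: "square_integrable M (\<lambda>x. c)"
  unfolding square_integrable_def by simp

lemma square_integrable_compose:
  assumes S: "measure_preserving M S" and u: "square_integrable M u"
  shows "square_integrable M (\<lambda>x. u (S x))" and "L2_norm_sq (\<lambda>x. u (S x)) = L2_norm_sq u"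
proof -
  have Sm: "S \<in> measurable M M" and Sd: "distr M M S = M"
    using S unfolding measure_preserving_def by auto
  have ub: "u \<in> borel_measurable M" and ui: "integrable M (\<lambda>x. (norm (u x))\<^sup>2)"
    using u unfolding square_integrable_def by auto
  have nb: "(\<lambda>x. (norm (u x))\<^sup>2) \<in> borel_measurable M" using ub by measurable
  have "integrable M (\<lambda>x. (norm (u (S x)))\<^sup>2)"
    using ui Sd integrable_distr_eq[OF Sm nb] by simp
  moreover have "(\<lambda>x. u (S x)) \<in> borel_measurable M"
    using measurable_compose[OF Sm ub] by (simp add: comp_def)
  ultimately show "square_integrable M (\<lambda>x. u (S x))" unfolding square_integrable_def by simp
  have "L2_norm_sq u = (\<integral>x. (norm (u x))\<^sup>2 \<partial>(distr M M S))" using Sd by simp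
  also have "\<dots> = L2_norm_sq (\<lambda>x. u (S x))" by (rule integral_distr[OF Sm nb])
  finally show "L2_norm_sq (\<lambda>x. u (S x)) = L2_norm_sq u" by simp
qed

lemma square_integrable_diff:
  assumes u: "square_integrable M u" and v: "square_integrable M v"
  shows "square_integrable M (\<lambda>x. u x - v x)"
proof -
  have ub: "u \<in> borel_measurable M" and ui: "integrable M (\<lambda>x. (norm (u x))\<^sup>2)"
    and vb: "v \<in> borel_measurable M" and vi: "integrable M (\<lambda>x. (norm (v x))\<^sup>2)"
    using u v unfolding square_integrable_def by auto
  have b: "(\<lambda>x. u x - v x) \<in> borel_measurable M" using ub vb by measurable
  have pw: "(norm (u x - v x))\<^sup>2 \<le> 2 * (norm (u x))\<^sup>2 + 2 * (norm (v x))\<^sup>2" for x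
  proof -
    have "(norm (u x - v x))\<^sup>2 \<le> (norm (u x) + norm (v x))\<^sup>2"
      by (simp add: power_mono norm_triangle_ineq4)
    also have "\<dots> \<le> 2 * (norm (u x))\<^sup>2 + 2 * (norm (v x))\<^sup>2"
      using zero_le_power2[of "norm (u x) - norm (v x)"]
      by (simp add: power2_eq_square algebra_simps)
    finally show ?thesis .
  qed
  have "integrable M (\<lambda>x. (norm (u x - v x))\<^sup>2)"
    by (rule Bochner_Integration.integrable_bound
        [where f="\<lambda>x. 2 * (norm (u x))\<^sup>2 + 2 * (norm (v x))\<^sup>2"])
      (use ui vi b pw in auto)
  then show ?thesis unfolding square_integrable_def using b by simp
qed

lemma integrable_correlation:
  assumes S: "measure_preserving M S" and u: "square_integrable M u" and v: "square_integrable M v"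
  shows "integrable M (\<lambda>x. u (S x) * cnj (v x))"
    and "t > 0 \<Longrightarrow> norm (correlation M S u v) \<le> (t * L2_norm_sq u + L2_norm_sq v / t) / 2"
proof -
  have uSb: "(\<lambda>x. u (S x)) \<in> borel_measurable M" and uSi: "integrable M (\<lambda>x. (norm (u (S x)))\<^sup>2)"
    and vb: "v \<in> borel_measurable M" and vi: "integrable M (\<lambda>x. (norm (v x))\<^sup>2)"
    using square_integrable_compose(1)[OF S u] v unfolding square_integrable_def by auto
  have mb: "(\<lambda>x. u (S x) * cnj (v x)) \<in> borel_measurable M" using uSb vb by measurable
  define w where "w t x = (t * (norm (u (S x)))\<^sup>2 + (norm (v x))\<^sup>2 / t) / 2" for t x
  have wi: "integrable M (w t)" for t unfolding w_def using uSi vi by auto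
  have pt: "norm (u (S x) * cnj (v x)) \<le> w t x" if "t > 0" for t x
    unfolding w_def using mult_le_weighted_squares[OF that] by (simp add: norm_mult)
  have w0: "0 \<le> w t x" if "t > 0" for t x unfolding w_def using that by simp
  show ii: "integrable M (\<lambda>x. u (S x) * cnj (v x))"
    by (rule Bochner_Integration.integrable_bound[OF wi[of 1] mb]) (use pt[of 1] w0[of 1] in auto)
  assume t: "t > 0"
  have "norm (correlation M S u v) \<le> (\<integral>x. norm (u (S x) * cnj (v x)) \<partial>M)"
    unfolding correlation_def by (rule integral_norm_bound)
  also have "\<dots> \<le> (\<integral>x. w t x \<partial>M)" by (rule integral_mono) (use ii wi pt t in auto)
  also have "\<dots> = (t * L2_norm_sq (\<lambda>x. u (S x)) + L2_norm_sq v / t) / 2"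
    unfolding w_def using uSi vi by simp
  finally show "norm (correlation M S u v) \<le> (t * L2_norm_sq u + L2_norm_sq v / t) / 2"
    unfolding square_integrable_compose(2)[OF S u] .
qed

lemmas norm_correlation_le = integrable_correlation(2)

lemma correlation_diff:
  assumes S: "measure_preserving M S"
    and f: "square_integrable M f" "square_integrable M f'"
    and g: "square_integrable M g" "square_integrable M g'"
  shows "correlation M S f g - correlation M S f' g'
    = correlation M S (\<lambda>x. f x - f' x) g + correlation M S f' (\<lambda>x. g x - g' x)"
proof -
  have d1: "square_integrable M (\<lambda>x. f x - f' x)" and d2: "square_integrable M (\<lambda>x. g x - g' x)"
    using square_integrable_diff f g by auto
  have i: "integrable M (\<lambda>x. f (S x) * cnj (g x))" "integrable M (\<lambda>x. f' (S x) * cnj (g' x))"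
    "integrable M (\<lambda>x. (f (S x) - f' (S x)) * cnj (g x))"
    "integrable M (\<lambda>x. f' (S x) * cnj (g x - g' x))"
    using integrable_correlation(1)[OF S f(1) g(1)] integrable_correlation(1)[OF S f(2) g(2)]
      integrable_correlation(1)[OF S d1 g(1)] integrable_correlation(1)[OF S f(2) d2] by auto
  have "correlation M S f g - correlation M S f' g'
      = (\<integral>x. f (S x) * cnj (g x) - f' (S x) * cnj (g' x) \<partial>M)"
    unfolding correlation_def using i by simp
  also have "\<dots> = (\<integral>x. (f (S x) - f' (S x)) * cnj (g x) + f' (S x) * cnj (g x - g' x) \<partial>M)"
    by (rule Bochner_Integration.integral_cong) (auto simp: algebra_simps)
  also have "\<dots> = correlation M S (\<lambda>x. f x - f' x) g + correlation M S f' (\<lambda>x. g x - g' x)"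
    unfolding correlation_def using i by simp
  finally show ?thesis .
qed

lemma correlation_approx:
  assumes S: "measure_preserving M S"
    and f: "square_integrable M f" "square_integrable M f'"
    and g: "square_integrable M g" "square_integrable M g'"
    and e: "\<epsilon> > 0" and C: "C \<ge> 1" and gC: "L2_norm_sq g \<le> C" and fC: "L2_norm_sq f' \<le> C"
    and df: "L2_norm_sq (\<lambda>x. f x - f' x) \<le> \<epsilon>\<^sup>2 / (4 * C)"
    and dg: "L2_norm_sq (\<lambda>x. g x - g' x) \<le> \<epsilon>\<^sup>2 / (4 * C)"
  shows "norm (correlation M S f g - correlation M S f' g') \<le> \<epsilon>"
proof -
  have d1: "square_integrable M (\<lambda>x. f x - f' x)" and d2: "square_integrable M (\<lambda>x. g x - g' x)"
    using square_integrable_diff f g by auto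
  have Cp: "C > 0" using C by simp
  have "norm (correlation M S (\<lambda>x. f x - f' x) g)
      \<le> (2 * C / \<epsilon> * L2_norm_sq (\<lambda>x. f x - f' x) + L2_norm_sq g / (2 * C / \<epsilon>)) / 2"
    by (rule norm_correlation_le[OF S d1 g(1)]) (use Cp e in simp)
  also have "\<dots> \<le> (2 * C / \<epsilon> * (\<epsilon>\<^sup>2 / (4 * C)) + C / (2 * C / \<epsilon>)) / 2"
    using df gC Cp e by (intro divide_right_mono add_mono mult_left_mono) auto
  also have "\<dots> = \<epsilon> / 2" using Cp e by (simp add: field_simps power2_eq_square)
  finally have b1: "norm (correlation M S (\<lambda>x. f x - f' x) g) \<le> \<epsilon> / 2" .
  have "norm (correlation M S f' (\<lambda>x. g x - g' x))
      \<le> (\<epsilon> / (2 * C) * L2_norm_sq f' + L2_norm_sq (\<lambda>x. g x - g' x) / (\<epsilon> / (2 * C))) / 2"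
    by (rule norm_correlation_le[OF S f(2) d2]) (use Cp e in simp)
  also have "\<dots> \<le> (\<epsilon> / (2 * C) * C + (\<epsilon>\<^sup>2 / (4 * C)) / (\<epsilon> / (2 * C))) / 2"
    using dg fC Cp e by (intro divide_right_mono add_mono mult_left_mono) auto
  also have "\<dots> = \<epsilon> / 2" using Cp e by (simp add: field_simps power2_eq_square)
  finally have b2: "norm (correlation M S f' (\<lambda>x. g x - g' x)) \<le> \<epsilon> / 2" .
  show ?thesis
    unfolding correlation_diff[OF S f g]
    using b1 b2 norm_triangle_ineq[of "correlation M S (\<lambda>x. f x - f' x) g"
        "correlation M S f' (\<lambda>x. g x - g' x)"]
    by linarith
qed

lemma integral_eq_correlation: "(\<integral>x. f x \<partial>M) = correlation M (\<lambda>x. x) f (\<lambda>x. 1)"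
  unfolding correlation_def by simp

lemma norm_integral_le_L2: "square_integrable M f \<Longrightarrow> norm (\<integral>x. f x \<partial>M) \<le> (L2_norm_sq f + 1) / 2"
  using norm_correlation_le[OF measure_preserving_id _ square_integrable_const, of f 1 1] prob_space
  unfolding integral_eq_correlation by simp

lemma integral_approx:
  assumes f: "square_integrable M f" "square_integrable M f'" and e: "\<eta> > 0"
    and df: "L2_norm_sq (\<lambda>x. f x - f' x) \<le> \<eta>\<^sup>2"
  shows "norm ((\<integral>x. f x \<partial>M) - (\<integral>x. f' x \<partial>M)) \<le> \<eta>"
proof -
  have "(\<integral>x. f x \<partial>M) - (\<integral>x. f' x \<partial>M)
      = correlation M (\<lambda>x. x) (\<lambda>x. f x - f' x) (\<lambda>x. 1) + correlation M (\<lambda>x. x) f' (\<lambda>x. 1 - 1)"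
    unfolding integral_eq_correlation
    by (rule correlation_diff[OF measure_preserving_id f square_integrable_const
        square_integrable_const])
  also have "correlation M (\<lambda>x. x) f' (\<lambda>x. 1 - 1) = 0" unfolding correlation_def by simp
  finally have eq: "(\<integral>x. f x \<partial>M) - (\<integral>x. f' x \<partial>M) = correlation M (\<lambda>x. x) (\<lambda>x. f x - f' x) (\<lambda>x. 1)"
    by simp
  have "norm (correlation M (\<lambda>x. x) (\<lambda>x. f x - f' x) (\<lambda>x. 1))
      \<le> (1 / \<eta> * L2_norm_sq (\<lambda>x. f x - f' x) + L2_norm_sq (\<lambda>x. 1::complex) / (1 / \<eta>)) / 2"
    by (rule norm_correlation_le[OF measure_preserving_id square_integrable_diff[OF f]
        square_integrable_const])
      (use e in simp)
  also have "\<dots> \<le> (1 / \<eta> * \<eta>\<^sup>2 + 1 / (1 / \<eta>)) / 2"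
    using df e by (intro divide_right_mono add_mono mult_left_mono) auto
  also have "\<dots> = \<eta>" using e by (simp add: field_simps power2_eq_square)
  finally show ?thesis unfolding eq .
qed

lemma integral_indicator_complex:
  assumes X: "X \<in> sets M"
  shows "integrable M (\<lambda>x. indicator X x :: complex)"
    and "(\<integral>x. indicator X x \<partial>M) = complex_of_real (measure M X)"
proof -
  have "integrable M (\<lambda>x. indicator X x :: real)"
    by (rule integrable_real_indicator[OF X]) (simp add: less_top[symmetric])
  then have "integrable M (\<lambda>x. of_real (indicator X x) :: complex)" by (rule integrable_of_real)
  then show "integrable M (\<lambda>x. indicator X x :: complex)" by (simp add: of_real_indicator)
  have "(\<integral>x. indicator X x \<partial>M) = (\<integral>x. complex_of_real (indicator X x) \<partial>M)"
    by (simp add: of_real_indicator)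
  also have "\<dots> = complex_of_real (measure M X)"
    using X sets.sets_into_space[OF X] by (simp add: Int_absorb2)
  finally show "(\<integral>x. indicator X x \<partial>M) = complex_of_real (measure M X)" .
qed

lemma correlation_step_functions:
  assumes S: "S \<in> measurable M M" and fin: "finite I" "finite J"
    and A: "\<And>i. i \<in> I \<Longrightarrow> A i \<in> sets M" and B: "\<And>j. j \<in> J \<Longrightarrow> B j \<in> sets M"
    and f: "\<And>x. x \<in> space M \<Longrightarrow> f x = (\<Sum>i\<in>I. c i * indicator (A i) x)"
    and g: "\<And>x. x \<in> space M \<Longrightarrow> g x = (\<Sum>j\<in>J. d j * indicator (B j) x)"
  shows "correlation M S f g = (\<Sum>i\<in>I. \<Sum>j\<in>J.
      c i * cnj (d j) * complex_of_real (measure M ({x \<in> space M. S x \<in> A i} \<inter> B j)))"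
proof -
  let ?X = "\<lambda>i j. {x \<in> space M. S x \<in> A i} \<inter> B j"
  have Xs: "i \<in> I \<Longrightarrow> j \<in> J \<Longrightarrow> ?X i j \<in> sets M" for i j
    using measurable_sets[OF S A] B by (auto simp: vimage_def Int_def conj_commute)
  have pt: "f (S x) * cnj (g x) = (\<Sum>i\<in>I. \<Sum>j\<in>J. c i * cnj (d j) * indicator (?X i j) x)"
    if x: "x \<in> space M" for x
  proof -
    have "f (S x) * cnj (g x)
        = (\<Sum>i\<in>I. \<Sum>j\<in>J. (c i * indicator (A i) (S x)) * (cnj (d j) * indicator (B j) x))"
      using f[OF measurable_space[OF S x]] g[OF x] by (simp add: sum_product)
    also have "\<dots> = (\<Sum>i\<in>I. \<Sum>j\<in>J. c i * cnj (d j) * indicator (?X i j) x)"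
      using x by (intro sum.cong refl) (auto simp: indicator_def)
    finally show ?thesis .
  qed
  have int: "i \<in> I \<Longrightarrow> j \<in> J \<Longrightarrow> integrable M (\<lambda>x. c i * cnj (d j) * indicator (?X i j) x)" for i j
    using integral_indicator_complex(1)[OF Xs] by (intro integrable_mult_right)
  have "correlation M S f g = (\<integral>x. (\<Sum>i\<in>I. \<Sum>j\<in>J. c i * cnj (d j) * indicator (?X i j) x) \<partial>M)"
    unfolding correlation_def by (rule Bochner_Integration.integral_cong) (use pt in auto)
  also have "\<dots> = (\<Sum>i\<in>I. \<Sum>j\<in>J. \<integral>x. c i * cnj (d j) * indicator (?X i j) x \<partial>M)"
    using int by (simp add: Bochner_Integration.integral_sum Bochner_Integration.integrable_sum)
  also have "\<dots> = (\<Sum>i\<in>I. \<Sum>j\<in>J. c i * cnj (d j) * complex_of_real (measure M (?X i j)))"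
    by (intro sum.cong refl) (simp add: integral_indicator_complex(2) Xs)
  finally show ?thesis .
qed

lemma integral_step_function:
  assumes fin: "finite I" and A: "\<And>i. i \<in> I \<Longrightarrow> A i \<in> sets M"
    and f: "\<And>x. x \<in> space M \<Longrightarrow> f x = (\<Sum>i\<in>I. c i * indicator (A i) x)"
  shows "(\<integral>x. f x \<partial>M) = (\<Sum>i\<in>I. c i * complex_of_real (measure M (A i)))"
proof -
  have "(\<integral>x. f x \<partial>M) = (\<Sum>i\<in>I. \<Sum>j\<in>{()}.
      c i * cnj 1 * complex_of_real (measure M ({x \<in> space M. x \<in> A i} \<inter> space M)))"
    unfolding integral_eq_correlation
    by (rule correlation_step_functions[where B="\<lambda>_. space M" and d="\<lambda>_. 1"]) (use fin A f in auto)
  also have "\<dots> = (\<Sum>i\<in>I. c i * complex_of_real (measure M (A i)))"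
    using A sets.sets_into_space by (intro sum.cong refl)
        (simp add: Collect_conj_eq Int_absorb1 Int_absorb2)
  finally show ?thesis .
qed

lemma simple_function_as_step_function:
  assumes g: "simple_function M (g :: 'a \<Rightarrow> complex)" and x: "x \<in> space M"
  shows "g x = (\<Sum>y\<in>g ` space M. y * indicator (g -` {y} \<inter> space M) x)"
proof -
  have "g x = (\<Sum>y\<in>g ` space M. indicator (g -` {y} \<inter> space M) x *\<^sub>R y)"
    by (rule simple_function_indicator_representation_banach[OF g x])
  also have "\<dots> = (\<Sum>y\<in>g ` space M. y * indicator (g -` {y} \<inter> space M) x)"
    by (intro sum.cong refl) (simp add: scaleR_conv_of_real of_real_indicator mult.commute)
  finally show ?thesis .
qed

lemma simple_functions_dense_L2:
  assumes f: "square_integrable M f"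
  obtains F where "\<And>i. simple_function M (F i)" "\<And>i x. x \<in> space M \<Longrightarrow> norm (F i x) \<le> 2 * norm (f x)"
    and "(\<lambda>i. L2_norm_sq (\<lambda>x. f x - F i x)) \<longlonglongrightarrow> 0"
proof -
  have fb: "f \<in> borel_measurable M" and fi: "integrable M (\<lambda>x. (norm (f x))\<^sup>2)"
    using f unfolding square_integrable_def by auto
  obtain F where F: "\<And>i. simple_function M (F i)" "\<And>x. x \<in> space M \<Longrightarrow> (\<lambda>i. F i x) \<longlonglongrightarrow> f x"
    "\<And>i x. x \<in> space M \<Longrightarrow> dist (F i x) 0 \<le> 2 * dist (f x) 0"
    using borel_measurable_implies_sequence_metric[OF fb, of 0] by blast
  have Fb: "F i \<in> borel_measurable M" for i using F(1) by (rule borel_measurable_simple_function)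
  have bnd: "norm (F i x) \<le> 2 * norm (f x)" if "x \<in> space M" for i x using F(3)[OF that] by simp
  have dom: "(norm (f x - F i x))\<^sup>2 \<le> 9 * (norm (f x))\<^sup>2" if x: "x \<in> space M" for i x
  proof -
    have "norm (f x - F i x) \<le> 3 * norm (f x)"
      using norm_triangle_ineq4[of "f x" "F i x"] bnd[OF x, of i] by simp
    then have "(norm (f x - F i x))\<^sup>2 \<le> (3 * norm (f x))\<^sup>2" by (rule power_mono) simp
    then show ?thesis by (simp add: power_mult_distrib)
  qed
  have "(\<lambda>i. \<integral>x. (norm (f x - F i x))\<^sup>2 \<partial>M) \<longlonglongrightarrow> (\<integral>x. 0 \<partial>M)"
  proof (rule integral_dominated_convergence[where w="\<lambda>x. 9 * (norm (f x))\<^sup>2"])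
    show "AE x in M. (\<lambda>i. (norm (f x - F i x))\<^sup>2) \<longlonglongrightarrow> 0"
    proof (rule AE_I2)
      fix x assume "x \<in> space M"
      then have "(\<lambda>i. (norm (f x - F i x))\<^sup>2) \<longlonglongrightarrow> (norm (f x - f x))\<^sup>2"
        by (intro tendsto_intros F(2))
      then show "(\<lambda>i. (norm (f x - F i x))\<^sup>2) \<longlonglongrightarrow> 0" by simp
    qed
  qed (use fi fb Fb dom in auto)
  then show ?thesis using that F(1) bnd by auto
qed

lemma square_integrable_dominated:
  assumes g: "g \<in> borel_measurable M" and f: "square_integrable M f"
    and b: "\<And>x. x \<in> space M \<Longrightarrow> norm (g x) \<le> 2 * norm (f x)"
  shows "square_integrable M g" and "L2_norm_sq g \<le> 4 * L2_norm_sq f"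
proof -
  have fi: "integrable M (\<lambda>x. (norm (f x))\<^sup>2)" using f unfolding square_integrable_def by auto
  have pw: "(norm (g x))\<^sup>2 \<le> 4 * (norm (f x))\<^sup>2" if x: "x \<in> space M" for x
    using power_mono[OF b[OF x] norm_ge_zero, of 2] by (simp add: power_mult_distrib)
  have gi: "integrable M (\<lambda>x. (norm (g x))\<^sup>2)"
    by (rule Bochner_Integration.integrable_bound[where f="\<lambda>x. 4 * (norm (f x))\<^sup>2"])
        (use fi g pw in auto)
  then show "square_integrable M g" unfolding square_integrable_def using g by simp
  show "L2_norm_sq g \<le> 4 * L2_norm_sq f"
    using integral_mono[OF gi _ pw] fi by simp
qed

lemma simple_approximant:
  assumes f: "square_integrable M f" and \<delta>: "\<delta> > 0"
  obtains f' where "simple_function M f'" "square_integrable M f'"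
    "L2_norm_sq f' \<le> 4 * L2_norm_sq f" "L2_norm_sq (\<lambda>x. f x - f' x) \<le> \<delta>"
proof -
  obtain F where F: "\<And>i. simple_function M (F i)"
    "\<And>i x. x \<in> space M \<Longrightarrow> norm (F i x) \<le> 2 * norm (f x)"
    "(\<lambda>i. L2_norm_sq (\<lambda>x. f x - F i x)) \<longlonglongrightarrow> 0"
    using simple_functions_dense_L2[OF f] by blast
  obtain i where "L2_norm_sq (\<lambda>x. f x - F i x) \<le> \<delta>"
    using order_tendstoD(2)[OF F(3) \<delta>] unfolding eventually_sequentially
    by (meson less_imp_le order_refl)
  then show thesis
    using that[OF F(1)]
      square_integrable_dominated[OF borel_measurable_simple_function[OF F(1)] f F(2)]
    by blast
qed

end

section \<open>From sets to square-integrable functions\<close>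

locale correlation_limit = prob_space M for M :: "'a measure" +
  fixes R :: "nat \<Rightarrow> 'a \<Rightarrow> 'a" and \<alpha> :: real
  assumes measure_preserving_R: "\<And>n. measure_preserving M (R n)"
    and \<alpha>_nonneg: "0 \<le> \<alpha>" and \<alpha>_le_1: "\<alpha> \<le> 1"
begin

definition overlap :: "nat \<Rightarrow> 'a set \<Rightarrow> 'a set \<Rightarrow> real" where
  "overlap n E F = measure M ({x \<in> space M. R n x \<in> E} \<inter> F)"

definition limit_overlap :: "'a set \<Rightarrow> 'a set \<Rightarrow> real" where
  "limit_overlap E F = (1 - \<alpha>) * measure M (E \<inter> F) + \<alpha> * measure M E * measure M F"

definition limit_correlation :: "('a \<Rightarrow> complex) \<Rightarrow> ('a \<Rightarrow> complex) \<Rightarrow> complex" where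
  "limit_correlation f g = complex_of_real \<alpha> * ((\<integral>x. f x \<partial>M) * cnj (\<integral>x. g x \<partial>M))
     + complex_of_real (1 - \<alpha>) * (\<integral>x. f x * cnj (g x) \<partial>M)"

lemma R_measurable: "R n \<in> measurable M M"
  using measure_preserving_R unfolding measure_preserving_def by blast

lemma sets_preimage_R: "A \<in> sets M \<Longrightarrow> {x \<in> space M. R n x \<in> A} \<in> sets M"
  using measurable_sets[OF R_measurable] by (simp add: vimage_def Int_def conj_commute)

lemma measure_preimage_R: "A \<in> sets M \<Longrightarrow> measure M {x \<in> space M. R n x \<in> A} = measure M A"
proof -
  assume A: "A \<in> sets M"
  have "measure M A = measure (distr M M (R n)) A"
    using measure_preserving_R[of n] unfolding measure_preserving_def by simp
  also have "\<dots> = measure M (R n -` A \<inter> space M)" by (rule measure_distr[OF R_measurable A])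
  finally show ?thesis by (simp add: vimage_def Int_def conj_commute)
qed

lemma abs_measure_diff_le_sym_diff:
  assumes "A \<in> sets M" "B \<in> sets M"
  shows "\<bar>measure M A - measure M B\<bar> \<le> measure M (sym_diff A B)"
proof -
  have "measure M A \<le> measure M B + measure M (sym_diff A B)"
    "measure M B \<le> measure M A + measure M (sym_diff A B)"
    using assms by (auto intro!: order_trans[OF finite_measure_mono measure_Un_le])
  then show ?thesis by linarith
qed

lemma overlap_perturb:
  assumes s: "E \<in> sets M" "E' \<in> sets M" "F \<in> sets M" "F' \<in> sets M"
  shows "\<bar>overlap n E F - overlap n E' F'\<bar> \<le> measure M (sym_diff E E') + measure M (sym_diff F F')"
proof -
  let ?P = "{x \<in> space M. R n x \<in> E} \<inter> F" and ?P' = "{x \<in> space M. R n x \<in> E'} \<inter> F'"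
  have D: "{x \<in> space M. R n x \<in> sym_diff E E'} \<in> sets M" using s by (intro sets_preimage_R) auto
  have "measure M (sym_diff ?P ?P')
      \<le> measure M ({x \<in> space M. R n x \<in> sym_diff E E'} \<union> sym_diff F F')"
    using s D by (intro finite_measure_mono) auto
  also have "\<dots> \<le> measure M {x \<in> space M. R n x \<in> sym_diff E E'} + measure M (sym_diff F F')"
    using s D by (intro measure_Un_le) auto
  also have "measure M {x \<in> space M. R n x \<in> sym_diff E E'} = measure M (sym_diff E E')"
    using s by (intro measure_preimage_R) auto
  finally show ?thesis
    using abs_measure_diff_le_sym_diff[of ?P ?P'] s sets_preimage_R unfolding overlap_def
    by fastforce
qed

lemma limit_overlap_perturb:
  assumes s: "E \<in> sets M" "E' \<in> sets M" "F \<in> sets M" "F' \<in> sets M"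
  shows "\<bar>limit_overlap E F - limit_overlap E' F'\<bar>
      \<le> measure M (sym_diff E E') + measure M (sym_diff F F')"
proof -
  let ?a = "measure M (sym_diff E E')" and ?b = "measure M (sym_diff F F')"
  have "measure M (sym_diff (E \<inter> F) (E' \<inter> F')) \<le> measure M (sym_diff E E' \<union> sym_diff F F')"
    using s by (intro finite_measure_mono) auto
  also have "\<dots> \<le> ?a + ?b" using s by (intro measure_Un_le) auto
  finally have i: "\<bar>measure M (E \<inter> F) - measure M (E' \<inter> F')\<bar> \<le> ?a + ?b"
    using abs_measure_diff_le_sym_diff[of "E \<inter> F" "E' \<inter> F'"] s by auto
  have e: "\<bar>measure M E - measure M E'\<bar> \<le> ?a" and f: "\<bar>measure M F - measure M F'\<bar> \<le> ?b"
    using abs_measure_diff_le_sym_diff s by auto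
  have "\<bar>measure M E * measure M F - measure M E' * measure M F'\<bar>
      = \<bar>(measure M E - measure M E') * measure M F + measure M E' * (measure M F - measure M F')\<bar>"
    by (simp add: algebra_simps)
  also have "\<dots> \<le> \<bar>measure M E - measure M E'\<bar> * measure M F
      + measure M E' * \<bar>measure M F - measure M F'\<bar>"
    by (simp add: abs_mult abs_triangle_ineq[THEN order_trans])
  also have "\<dots> \<le> ?a * 1 + 1 * ?b"
    using e f by (intro add_mono mult_mono) auto
  finally have p: "\<bar>measure M E * measure M F - measure M E' * measure M F'\<bar> \<le> ?a + ?b" by simp
  have "\<bar>limit_overlap E F - limit_overlap E' F'\<bar>
      = \<bar>(1 - \<alpha>) * (measure M (E \<inter> F) - measure M (E' \<inter> F'))
         + \<alpha> * (measure M E * measure M F - measure M E' * measure M F')\<bar>"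
    unfolding limit_overlap_def by (simp add: algebra_simps)
  also have "\<dots> \<le> (1 - \<alpha>) * \<bar>measure M (E \<inter> F) - measure M (E' \<inter> F')\<bar>
        + \<alpha> * \<bar>measure M E * measure M F - measure M E' * measure M F'\<bar>"
    using \<alpha>_nonneg \<alpha>_le_1 by (simp add: abs_mult abs_triangle_ineq[THEN order_trans])
  also have "\<dots> \<le> (1 - \<alpha>) * (?a + ?b) + \<alpha> * (?a + ?b)"
    using \<alpha>_nonneg \<alpha>_le_1 i p by (intro add_mono mult_left_mono) auto
  finally show ?thesis by (simp add: algebra_simps)
qed

lemma overlap_tendsto_approx:
  assumes s: "E \<in> sets M" "F \<in> sets M"
    and approx: "\<And>e. e > 0 \<Longrightarrow> \<exists>E' F'. E' \<in> sets M \<and> F' \<in> sets M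
        \<and> measure M (sym_diff E E') < e \<and> measure M (sym_diff F F') < e
        \<and> (\<lambda>n. overlap n E' F') \<longlonglongrightarrow> limit_overlap E' F'"
  shows "(\<lambda>n. overlap n E F) \<longlonglongrightarrow> limit_overlap E F"
proof (rule metric_LIMSEQ_I)
  fix r :: real assume r: "r > 0"
  obtain E' F' where E'F': "E' \<in> sets M" "F' \<in> sets M"
    "measure M (sym_diff E E') < r / 5" "measure M (sym_diff F F') < r / 5"
    "(\<lambda>n. overlap n E' F') \<longlonglongrightarrow> limit_overlap E' F'"
    using approx[of "r / 5"] r by auto
  obtain n0 where n0: "\<forall>n\<ge>n0. dist (overlap n E' F') (limit_overlap E' F') < r / 5"
    using metric_LIMSEQ_D[OF E'F'(5), of "r / 5"] r by auto
  have "dist (overlap n E F) (limit_overlap E F) < r" if "n \<ge> n0" for n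
  proof -
    have "\<bar>overlap n E' F' - limit_overlap E' F'\<bar> < r / 5"
      using n0 that by (simp add: dist_real_def)
    then show ?thesis
      using overlap_perturb[OF s(1) E'F'(1) s(2) E'F'(2), of n]
        limit_overlap_perturb[OF s(1) E'F'(1) s(2) E'F'(2)] E'F'(3,4)
      unfolding dist_real_def by linarith
  qed
  then show "\<exists>n0. \<forall>n\<ge>n0. dist (overlap n E F) (limit_overlap E F) < r" by blast
qed

lemma correlation_tendsto_step_functions:
  assumes lim: "\<And>E F. E \<in> sets M \<Longrightarrow> F \<in> sets M \<Longrightarrow> (\<lambda>n. overlap n E F) \<longlonglongrightarrow> limit_overlap E F"
    and fin: "finite I" "finite J"
    and A: "\<And>i. i \<in> I \<Longrightarrow> A i \<in> sets M" and B: "\<And>j. j \<in> J \<Longrightarrow> B j \<in> sets M"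
    and f: "\<And>x. x \<in> space M \<Longrightarrow> f x = (\<Sum>i\<in>I. c i * indicator (A i) x)"
    and g: "\<And>x. x \<in> space M \<Longrightarrow> g x = (\<Sum>j\<in>J. d j * indicator (B j) x)"
  shows "(\<lambda>n. correlation M (R n) f g) \<longlonglongrightarrow> limit_correlation f g"
proof -
  have corr: "correlation M (R n) f g
      = (\<Sum>i\<in>I. \<Sum>j\<in>J. c i * cnj (d j) * complex_of_real (overlap n (A i) (B j)))" for n
    unfolding overlap_def by (rule correlation_step_functions[OF R_measurable fin A B f g])
  have AB: "i \<in> I \<Longrightarrow> {x \<in> space M. x \<in> A i} \<inter> B j = A i \<inter> B j" for i j
    using A sets.sets_into_space by blast
  have "(\<integral>x. f x * cnj (g x) \<partial>M) = correlation M (\<lambda>x. x) f g" unfolding correlation_def by simp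
  also have "\<dots> = (\<Sum>i\<in>I. \<Sum>j\<in>J.
      c i * cnj (d j) * complex_of_real (measure M ({x \<in> space M. x \<in> A i} \<inter> B j)))"
    by (rule correlation_step_functions[OF measurable_ident_sets[OF refl] fin A B f g])
  also have "\<dots> = (\<Sum>i\<in>I. \<Sum>j\<in>J. c i * cnj (d j) * complex_of_real (measure M (A i \<inter> B j)))"
    using AB by simp
  finally have inner: "(\<integral>x. f x * cnj (g x) \<partial>M)
      = (\<Sum>i\<in>I. \<Sum>j\<in>J. c i * cnj (d j) * complex_of_real (measure M (A i \<inter> B j)))" .
  have intf: "(\<integral>x. f x \<partial>M) = (\<Sum>i\<in>I. c i * complex_of_real (measure M (A i)))"
    by (rule integral_step_function[OF fin(1) A f])
  have intg: "cnj (\<integral>x. g x \<partial>M) = (\<Sum>j\<in>J. cnj (d j) * complex_of_real (measure M (B j)))"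
    using integral_step_function[OF fin(2) B g] by simp
  have "limit_correlation f g = complex_of_real \<alpha> * (\<Sum>i\<in>I. \<Sum>j\<in>J.
        (c i * complex_of_real (measure M (A i))) * (cnj (d j) * complex_of_real (measure M (B j))))
      + complex_of_real (1 - \<alpha>) * (\<Sum>i\<in>I. \<Sum>j\<in>J.
        c i * cnj (d j) * complex_of_real (measure M (A i \<inter> B j)))"
    unfolding limit_correlation_def intf intg inner sum_product ..
  also have "\<dots> = (\<Sum>i\<in>I. \<Sum>j\<in>J. c i * cnj (d j) * complex_of_real (limit_overlap (A i) (B j)))"
    unfolding limit_overlap_def sum_distrib_left sum.distrib[symmetric]
    by (intro sum.cong refl) (simp add: algebra_simps)
  finally show ?thesis unfolding corr
    by (simp only:) (intro tendsto_sum tendsto_mult_left tendsto_of_real lim A B)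
qed

lemma correlation_tendsto_simple_functions:
  assumes lim: "\<And>E F. E \<in> sets M \<Longrightarrow> F \<in> sets M \<Longrightarrow> (\<lambda>n. overlap n E F) \<longlonglongrightarrow> limit_overlap E F"
    and f: "simple_function M f" and g: "simple_function M g"
  shows "(\<lambda>n. correlation M (R n) f g) \<longlonglongrightarrow> limit_correlation f g"
proof (rule correlation_tendsto_step_functions[OF lim, where A="\<lambda>y. f -` {y} \<inter> space M"
      and B="\<lambda>y. g -` {y} \<inter> space M" and c="\<lambda>y. y" and d="\<lambda>y. y"])
  show "finite (f ` space M)" "finite (g ` space M)"
    using simple_functionD(1) f g by auto
  show "\<And>y. f -` {y} \<inter> space M \<in> sets M" "\<And>y. g -` {y} \<inter> space M \<in> sets M"
    using simple_functionD(2) f g by auto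
qed (use simple_function_as_step_function f g in blast)+

lemma limit_correlation_approx:
  assumes f: "square_integrable M f" "square_integrable M f'"
    and g: "square_integrable M g" "square_integrable M g'"
    and e: "\<epsilon> > 0" and C: "C \<ge> 1" and gC: "L2_norm_sq g \<le> C" and fC: "L2_norm_sq f' \<le> C"
    and df: "L2_norm_sq (\<lambda>x. f x - f' x) \<le> \<epsilon>\<^sup>2 / (4 * C\<^sup>2)"
    and dg: "L2_norm_sq (\<lambda>x. g x - g' x) \<le> \<epsilon>\<^sup>2 / (4 * C\<^sup>2)"
  shows "norm (limit_correlation f g - limit_correlation f' g') \<le> \<epsilon>"
proof -
  have dle: "\<epsilon>\<^sup>2 / (4 * C\<^sup>2) \<le> \<epsilon>\<^sup>2 / (4 * C)"
    using C e by (intro divide_left_mono) (auto simp: power2_eq_square)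
  define \<eta> where "\<eta> = \<epsilon> / (2 * C)"
  have \<eta>: "\<eta> > 0" "\<eta>\<^sup>2 = \<epsilon>\<^sup>2 / (4 * C\<^sup>2)"
    using e C unfolding \<eta>_def by (auto simp: power2_eq_square)
  have if1: "norm ((\<integral>x. f x \<partial>M) - (\<integral>x. f' x \<partial>M)) \<le> \<eta>"
    by (rule integral_approx[OF f \<eta>(1)]) (use df \<eta>(2) in simp)
  have ig1: "norm ((\<integral>x. g x \<partial>M) - (\<integral>x. g' x \<partial>M)) \<le> \<eta>"
    by (rule integral_approx[OF g \<eta>(1)]) (use dg \<eta>(2) in simp)
  have bg: "norm (\<integral>x. g x \<partial>M) \<le> C"
    using norm_integral_le_L2[OF g(1)] gC C by simp
  have bf': "norm (\<integral>x. f' x \<partial>M) \<le> C"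
    using norm_integral_le_L2[OF f(2)] fC C by simp
  have "norm ((\<integral>x. f x \<partial>M) * cnj (\<integral>x. g x \<partial>M) - (\<integral>x. f' x \<partial>M) * cnj (\<integral>x. g' x \<partial>M))
      = norm (((\<integral>x. f x \<partial>M) - (\<integral>x. f' x \<partial>M)) * cnj (\<integral>x. g x \<partial>M)
          + (\<integral>x. f' x \<partial>M) * cnj ((\<integral>x. g x \<partial>M) - (\<integral>x. g' x \<partial>M)))"
    by (simp add: algebra_simps)
  also have "\<dots> \<le> \<eta> * C + C * \<eta>"
    using if1 ig1 bg bf' norm_triangle_ineq
    by (smt (verit, best) complex_mod_cnj mult_mono norm_ge_zero norm_mult)
  also have "\<dots> = \<epsilon>" unfolding \<eta>_def using C by simp
  finally have p1: "norm ((\<integral>x. f x \<partial>M) * cnj (\<integral>x. g x \<partial>M)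
      - (\<integral>x. f' x \<partial>M) * cnj (\<integral>x. g' x \<partial>M)) \<le> \<epsilon>" .
  have p2: "norm ((\<integral>x. f x * cnj (g x) \<partial>M) - (\<integral>x. f' x * cnj (g' x) \<partial>M)) \<le> \<epsilon>"
    using correlation_approx[OF measure_preserving_id f g e C gC fC] df dg dle
    unfolding correlation_def by simp
  have "limit_correlation f g - limit_correlation f' g'
      = complex_of_real \<alpha> * ((\<integral>x. f x \<partial>M) * cnj (\<integral>x. g x \<partial>M)
          - (\<integral>x. f' x \<partial>M) * cnj (\<integral>x. g' x \<partial>M))
        + complex_of_real (1 - \<alpha>) * ((\<integral>x. f x * cnj (g x) \<partial>M) - (\<integral>x. f' x * cnj (g' x) \<partial>M))"
    unfolding limit_correlation_def by (simp add: algebra_simps)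
  then have "norm (limit_correlation f g - limit_correlation f' g') \<le> \<alpha> * \<epsilon> + (1 - \<alpha>) * \<epsilon>"
    using p1 p2 \<alpha>_nonneg \<alpha>_le_1 norm_triangle_ineq
    by (smt (verit, best) mult_left_mono norm_mult norm_of_real)
  then show ?thesis by (simp add: algebra_simps)
qed

text \<open>Approximate \<open>f\<close>, \<open>g\<close> by simple functions to within \<open>\<epsilon>/(2C)\<close> in \<open>L\<^sup>2\<close>, where \<open>C\<close>
  bounds all the \<open>L\<^sup>2\<close> norms involved; this moves both sides by at most \<open>\<epsilon>\<close>.\<close>

lemma correlation_tendsto:
  assumes lim: "\<And>E F. E \<in> sets M \<Longrightarrow> F \<in> sets M \<Longrightarrow> (\<lambda>n. overlap n E F) \<longlonglongrightarrow> limit_overlap E F"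
    and f: "square_integrable M f" and g: "square_integrable M g"
  shows "(\<lambda>n. correlation M (R n) f g) \<longlonglongrightarrow> limit_correlation f g"
proof (rule metric_LIMSEQ_I)
  fix r :: real assume r: "r > 0"
  define \<epsilon> where "\<epsilon> = r / 3"
  define C where "C = 4 * L2_norm_sq f + 4 * L2_norm_sq g + 1"
  define \<delta> where "\<delta> = \<epsilon>\<^sup>2 / (4 * C\<^sup>2)"
  have e: "\<epsilon> > 0" using r unfolding \<epsilon>_def by simp
  have C: "C \<ge> 1" unfolding C_def by (simp add: add_nonneg_nonneg)
  have \<delta>: "\<delta> > 0" "\<delta> \<le> \<epsilon>\<^sup>2 / (4 * C)"
    unfolding \<delta>_def using C e by (auto intro!: divide_left_mono simp: power2_eq_square)
  obtain f' where f': "simple_function M f'" "square_integrable M f'"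
      "L2_norm_sq f' \<le> 4 * L2_norm_sq f" and df: "L2_norm_sq (\<lambda>x. f x - f' x) \<le> \<delta>"
    using simple_approximant[OF f \<delta>(1)] .
  obtain g' where g': "simple_function M g'" "square_integrable M g'"
      and dg: "L2_norm_sq (\<lambda>x. g x - g' x) \<le> \<delta>"
    using simple_approximant[OF g \<delta>(1)] .
  have "0 \<le> L2_norm_sq f" "0 \<le> L2_norm_sq g" by simp_all
  then have f'C: "L2_norm_sq f' \<le> C" and gC: "L2_norm_sq g \<le> C"
    using f'(3) unfolding C_def by linarith+
  obtain n0 where n0: "\<forall>n\<ge>n0. dist (correlation M (R n) f' g') (limit_correlation f' g') < \<epsilon>"
    using metric_LIMSEQ_D[OF correlation_tendsto_simple_functions[OF lim f'(1) g'(1)] e] by blast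
  have c1: "norm (correlation M (R n) f g - correlation M (R n) f' g') \<le> \<epsilon>" for n
    by (rule correlation_approx[OF measure_preserving_R f f'(2) g g'(2) e C gC f'C])
      (use df dg \<delta> in auto)
  have c2: "norm (limit_correlation f g - limit_correlation f' g') \<le> \<epsilon>"
    by (rule limit_correlation_approx[OF f f'(2) g g'(2) e C gC f'C]) (use df dg \<delta>_def in auto)
  have "dist (correlation M (R n) f g) (limit_correlation f g) < r" if "n \<ge> n0" for n
  proof -
    have "dist (correlation M (R n) f g) (limit_correlation f g)
        \<le> norm (correlation M (R n) f g - correlation M (R n) f' g')
          + dist (correlation M (R n) f' g') (limit_correlation f' g')
          + norm (limit_correlation f' g' - limit_correlation f g)"
      unfolding dist_norm by (rule norm_diff_triangle_le) (rule norm_diff_triangle_le, auto)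
    also have "\<dots> < \<epsilon> + \<epsilon> + \<epsilon>"
      using c1[of n] c2 n0[rule_format, OF that] by (simp add: norm_minus_commute)
    finally show ?thesis unfolding \<epsilon>_def by simp
  qed
  then show "\<exists>n0. \<forall>n\<ge>n0. dist (correlation M (R n) f g) (limit_correlation f g) < r" by blast
qed

end

section \<open>Rank-one systems\<close>

locale rank_one = prob_space M for M :: "'a measure" +
  fixes T Tinv :: "'a \<Rightarrow> 'a" and p :: "nat \<Rightarrow> nat" and s :: "nat \<Rightarrow> nat \<Rightarrow> nat"
    and B :: "nat \<Rightarrow> 'a set" and C :: "nat \<Rightarrow> nat \<Rightarrow> 'a set"
  assumes T_measurable: "T \<in> measurable M M" and Tinv_measurable: "Tinv \<in> measurable M M"
    and Tinv_T: "\<And>x. x \<in> space M \<Longrightarrow> Tinv (T x) = x"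
    and T_Tinv: "\<And>x. x \<in> space M \<Longrightarrow> T (Tinv x) = x"
    and distr_T: "distr M M T = M"
    and p_ge_2: "\<And>n. 2 \<le> p n"
    and sets_B: "\<And>n. B n \<in> sets M"
    and sets_C: "\<And>n i. i < p n \<Longrightarrow> C n i \<in> sets M"
    and B_eq_Union_C: "\<And>n. B n = (\<Union>i<p n. C n i)"
    and disjoint_C: "\<And>n i j. i < p n \<Longrightarrow> j < p n \<Longrightarrow> i \<noteq> j \<Longrightarrow> C n i \<inter> C n j = {}"
    and disjoint_levels: "\<And>n k j. k < rk1_height p s n \<Longrightarrow> j < rk1_height p s n \<Longrightarrow> k \<noteq> j \<Longrightarrow>
      (T ^^ k) ` B n \<inter> (T ^^ j) ` B n = {}"
    and image_C: "\<And>n i. Suc i < p n \<Longrightarrow> (T ^^ (rk1_height p s n + s n i)) ` C n i = C n (Suc i)"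
    and B_Suc: "\<And>n. B (Suc n) = C n 0"
    and levels_approx: "\<And>A e. A \<in> sets M \<Longrightarrow> e > 0 \<Longrightarrow> \<exists>n K. K \<subseteq> {..<rk1_height p s n} \<and>
      measure M (sym_diff A (\<Union>k\<in>K. (T ^^ k) ` B n)) < e"

lemma rank_one_systemD: "rank_one_system M T Tinv p s B C \<Longrightarrow> rank_one M T Tinv p s B C"
  unfolding rank_one_system_def rank_one_def rank_one_axioms_def
  by (elim conjE) (intro conjI allI impI; simp)

context rank_one
begin

lemma funpow_T_measurable: "T ^^ k \<in> measurable M M"
  by (rule measurable_compose_n[OF T_measurable])

lemma funpow_Tinv_measurable: "Tinv ^^ k \<in> measurable M M"
  by (rule measurable_compose_n[OF Tinv_measurable])

lemma funpow_T_space: "x \<in> space M \<Longrightarrow> (T ^^ k) x \<in> space M"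
  using funpow_T_measurable by (meson measurable_space)

lemma funpow_Tinv_space: "x \<in> space M \<Longrightarrow> (Tinv ^^ k) x \<in> space M"
  using funpow_Tinv_measurable by (meson measurable_space)

lemma funpow_Tinv_T: "x \<in> space M \<Longrightarrow> (Tinv ^^ k) ((T ^^ k) x) = x"
proof (induction k arbitrary: x)
  case (Suc k)
  have "(Tinv ^^ Suc k) ((T ^^ Suc k) x) = (Tinv ^^ k) (Tinv (T ((T ^^ k) x)))"
    by (simp add: funpow_swap1)
  then show ?case using Suc funpow_T_space Tinv_T by simp
qed simp

lemma funpow_T_Tinv: "x \<in> space M \<Longrightarrow> (T ^^ k) ((Tinv ^^ k) x) = x"
proof (induction k arbitrary: x)
  case (Suc k)
  have "(T ^^ Suc k) ((Tinv ^^ Suc k) x) = (T ^^ k) (T (Tinv ((Tinv ^^ k) x)))"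
    by (simp add: funpow_swap1)
  then show ?case using Suc funpow_Tinv_space T_Tinv by simp
qed simp

lemma image_funpow_T: "X \<subseteq> space M \<Longrightarrow> (T ^^ k) ` X = {x \<in> space M. (Tinv ^^ k) x \<in> X}"
proof safe
  fix x assume "X \<subseteq> space M" "x \<in> space M" "(Tinv ^^ k) x \<in> X"
  then show "x \<in> (T ^^ k) ` X" using funpow_T_Tinv by (metis image_eqI)
qed (use funpow_T_space funpow_Tinv_T in auto)

lemma sets_image_funpow_T: "X \<in> sets M \<Longrightarrow> (T ^^ k) ` X \<in> sets M"
  using image_funpow_T[OF sets.sets_into_space] measurable_sets[OF funpow_Tinv_measurable]
  by (simp add: vimage_def Int_def conj_commute)

lemma inj_on_funpow_T: "inj_on (T ^^ k) (space M)"
  by (metis inj_onI funpow_Tinv_T)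

lemma distr_funpow_T: "distr M M (T ^^ k) = M"
proof (induction k)
  case (Suc k)
  have "distr M M (T ^^ Suc k) = distr M M (T \<circ> T ^^ k)" by simp
  also have "\<dots> = distr (distr M M (T ^^ k)) M T"
    by (rule distr_distr[symmetric, OF T_measurable funpow_T_measurable])
  also have "\<dots> = M" using Suc distr_T by simp
  finally show ?case .
qed (simp add: distr_id2)

lemma measure_image_funpow_T: "X \<in> sets M \<Longrightarrow> measure M ((T ^^ k) ` X) = measure M X"
proof -
  assume X: "X \<in> sets M"
  have "measure M ((T ^^ k) ` X) = measure M ((T ^^ k) -` ((T ^^ k) ` X) \<inter> space M)"
    using measure_distr[OF funpow_T_measurable sets_image_funpow_T[OF X]] distr_funpow_T by simp
  also have "(T ^^ k) -` ((T ^^ k) ` X) \<inter> space M = X"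
    using sets.sets_into_space[OF X] inj_on_funpow_T[of k] by (auto simp: inj_on_def)
  finally show ?thesis .
qed

lemma image_funpow_T_add: "(T ^^ (a + b)) ` X = (T ^^ a) ` ((T ^^ b) ` X)"
  by (simp add: funpow_add image_comp)

lemma image_funpow_T_disjoint:
  "X \<subseteq> space M \<Longrightarrow> Y \<subseteq> space M \<Longrightarrow> X \<inter> Y = {} \<Longrightarrow> (T ^^ k) ` X \<inter> (T ^^ k) ` Y = {}"
  using inj_on_funpow_T[of k] unfolding inj_on_def by blast

lemma distr_funpow_Tinv: "distr M M (Tinv ^^ k) = M"
proof (rule measure_eqI)
  fix A assume "A \<in> sets (distr M M (Tinv ^^ k))"
  then have A: "A \<in> sets M" by simp
  have "(Tinv ^^ k) -` A \<inter> space M = (T ^^ k) ` A"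
    using image_funpow_T[OF sets.sets_into_space[OF A]] by auto
  then show "emeasure (distr M M (Tinv ^^ k)) A = emeasure M A"
    using emeasure_distr[OF funpow_Tinv_measurable A] measure_image_funpow_T[OF A]
      sets_image_funpow_T[OF A] A by (simp add: emeasure_eq_measure)
qed simp

lemma measure_preserving_ipow: "measure_preserving M (ipow T Tinv k)"
  unfolding measure_preserving_def ipow_def
  using funpow_T_measurable funpow_Tinv_measurable distr_funpow_T distr_funpow_Tinv by simp

end

section \<open>Spacers above the second half of the columns\<close>

locale rank_one_half_spacers = rank_one +
  assumes p_even: "\<And>n. even (p n)"
    and s_half: "\<And>n j. j < p n \<Longrightarrow> s n j = (if j < p n div 2 then 0 else 1)"
begin

abbreviation h :: "nat \<Rightarrow> nat" where
  "h n \<equiv> rk1_height p s n"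

definition q :: "nat \<Rightarrow> nat" where
  "q n = p n div 2"

text \<open>Column \<open>i\<close> of tower \<open>n\<close> starts at height \<open>offset n i\<close> of tower \<open>n + 1\<close>: below it lie
  \<open>i\<close> columns of height \<open>h n\<close> and one spacer above each earlier column of the second half.\<close>

definition offset :: "nat \<Rightarrow> nat \<Rightarrow> nat" where
  "offset n i = i * h n + (i - q n)"

definition level :: "nat \<Rightarrow> nat \<Rightarrow> 'a set" where
  "level n k = (T ^^ k) ` B n"

definition \<beta> :: "nat \<Rightarrow> real" where
  "\<beta> n = measure M (B n)"

lemma s_eq_q: "j < p n \<Longrightarrow> s n j = (if j < q n then 0 else 1)"
  using s_half q_def by simp

lemma p_eq_2q: "p n = 2 * q n" using p_even q_def by auto

lemma q_ge_1: "q n \<ge> 1" using p_ge_2[of n] p_eq_2q[of n] by simp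

lemma sum_spacers: "(\<Sum>i<p n. s n i) = q n"
proof -
  have "(\<Sum>i<p n. s n i) = (\<Sum>i<p n. (if q n \<le> i then 1 else 0))"
    by (rule sum.cong) (auto simp: s_eq_q)
  also have "\<dots> = card {i\<in>{..<p n}. q n \<le> i}"
    by (simp add: sum.If_cases Int_def)
  also have "{i\<in>{..<p n}. q n \<le> i} = {q n..<p n}" by auto
  also have "card \<dots> = q n" using p_eq_2q[of n] by simp
  finally show ?thesis .
qed

lemma h_Suc: "h (Suc n) = p n * h n + q n"
  using sum_spacers by simp

lemma h_ge_1: "h n \<ge> 1"
proof (induction n)
  case (Suc n)
  then show ?case using h_Suc[of n] p_ge_2[of n] q_ge_1[of n] by simp
qed simp

lemma h_Suc_ge: "h (Suc n) \<ge> 2 * h n"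
  using h_Suc[of n] p_ge_2[of n] by (metis le_add1 mult_le_mono1 order_trans)

lemma offset_Suc: "i < p n \<Longrightarrow> offset n (Suc i) = offset n i + h n + s n i"
  unfolding offset_def using s_eq_q[of i n] by (auto simp: Suc_diff_le)

lemma offset_0: "offset n 0 = 0" by (simp add: offset_def)

lemma image_B_Suc_offset: "i < p n \<Longrightarrow> (T ^^ offset n i) ` B (Suc n) = C n i"
proof (induction i)
  case 0
  then show ?case by (simp add: offset_0 B_Suc)
next
  case (Suc i)
  have "(T ^^ offset n (Suc i)) ` B (Suc n) = (T ^^ (h n + s n i)) ` (T ^^ offset n i) ` B (Suc n)"
  proof -
    have e: "offset n (Suc i) = (h n + s n i) + offset n i" using offset_Suc[of i n] Suc.prems
        by simp
    show ?thesis by (simp only: e image_funpow_T_add)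
  qed
  also have "\<dots> = C n (Suc i)" using Suc image_C[of i n] by simp
  finally show ?case .
qed

lemma sets_level: "level n k \<in> sets M" unfolding level_def by (rule sets_image_funpow_T[OF sets_B])

lemma measure_level: "measure M (level n k) = \<beta> n"
  unfolding level_def \<beta>_def by (rule measure_image_funpow_T[OF sets_B])

lemma level_subset_space: "level n k \<subseteq> space M" using sets_level sets.sets_into_space by blast

lemma measure_C: "i < p n \<Longrightarrow> measure M (C n i) = \<beta> (Suc n)"
  using image_B_Suc_offset[of i n] measure_image_funpow_T[OF sets_B, of "offset n i" "Suc n"]
      \<beta>_def by simp

lemma \<beta>_Suc: "\<beta> n = p n * \<beta> (Suc n)"
proof -
  have "\<beta> n = measure M (\<Union>i<p n. C n i)" using B_eq_Union_C \<beta>_def by simp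
  also have "\<dots> = (\<Sum>i<p n. measure M (C n i))"
    by (rule finite_measure_finite_Union) (auto simp: sets_C disjoint_family_on_def disjoint_C)
  also have "\<dots> = p n * \<beta> (Suc n)" using measure_C by simp
  finally show ?thesis .
qed

lemma level_eq_Union_Suc: "level n k = (\<Union>i<p n. level (Suc n) (offset n i + k))"
proof -
  have "level n k = (\<Union>i<p n. (T ^^ k) ` C n i)" unfolding level_def using B_eq_Union_C[of n] by auto
  also have "\<dots> = (\<Union>i<p n. level (Suc n) (offset n i + k))"
  proof (rule SUP_cong[OF refl])
    fix i assume "i \<in> {..<p n}"
    then show "(T ^^ k) ` C n i = level (Suc n) (offset n i + k)"
      using image_B_Suc_offset[of i n] image_funpow_T_add[of k "offset n i"] unfolding level_def
      by (simp add: add.commute)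
  qed
  finally show ?thesis .
qed

lemma offset_mono: "i < i' \<Longrightarrow> offset n i + h n \<le> offset n i'"
proof -
  assume "i < i'"
  then have "Suc i \<le> i'" by simp
  then have "Suc i * h n \<le> i' * h n" by (rule mult_le_mono1)
  moreover have "i - q n \<le> i' - q n" using \<open>i < i'\<close> by simp
  ultimately show ?thesis unfolding offset_def by simp
qed

lemma offset_add_less: "i < p n \<Longrightarrow> k < h n \<Longrightarrow> offset n i + k < h (Suc n)"
proof -
  assume a: "i < p n" "k < h n"
  have "Suc i * h n \<le> p n * h n" using a by (intro mult_le_mono1) simp
  then have "i * h n + k < p n * h n" using a by simp
  moreover have "i - q n \<le> q n" using a p_eq_2q[of n] by simp
  ultimately show ?thesis unfolding offset_def h_Suc by simp
qed

lemma offset_add_inj: "i < p n \<Longrightarrow> i' < p n \<Longrightarrow> k < h n \<Longrightarrow> k' < h n \<Longrightarrow>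
    offset n i + k = offset n i' + k' \<Longrightarrow> i = i' \<and> k = k'"
proof -
  assume a: "i < p n" "i' < p n" "k < h n" "k' < h n" "offset n i + k = offset n i' + k'"
  have "i = i'"
  proof (rule ccontr)
    assume "i \<noteq> i'"
    then have "i < i' \<or> i' < i" by arith
    then show False using offset_mono[of i i' n] offset_mono[of i' i n] a by auto
  qed
  then show ?thesis using a by simp
qed

lemma offset_spacer_ne: "i < p n \<Longrightarrow> q n \<le> i \<Longrightarrow> i' < p n \<Longrightarrow> k' < h n \<Longrightarrow>
    offset n i + h n \<noteq> offset n i' + k'"
proof
  assume a: "i < p n" "q n \<le> i" "i' < p n" "k' < h n" "offset n i + h n = offset n i' + k'"
  show False
  proof (cases "i' \<le> i")
    case True
    then have "offset n i' \<le> offset n i"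
      using offset_mono[of i' i n] by (cases "i' = i") auto
    then show ?thesis using a by simp
  next
    case False
    then have "offset n (Suc i) \<le> offset n i'" using offset_mono[of "Suc i" i' n]
      by (cases "Suc i = i'") auto
    moreover have "offset n (Suc i) = offset n i + h n + 1"
        using offset_Suc[of i n] a s_eq_q[of i n] by simp
    ultimately show ?thesis using a by simp
  qed
qed

lemma disjoint_level: "k < h n \<Longrightarrow> j < h n \<Longrightarrow> k \<noteq> j \<Longrightarrow> level n k \<inter> level n j = {}"
  unfolding level_def by (rule disjoint_levels)

lemma measure_Union_levels: "K \<subseteq> {..<h n} \<Longrightarrow> measure M (\<Union>k\<in>K. level n k) = card K * \<beta> n"
proof -
  assume K: "K \<subseteq> {..<h n}"
  then have fK: "finite K" using finite_subset by blast
  have "measure M (\<Union>k\<in>K. level n k) = (\<Sum>k\<in>K. measure M (level n k))"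
    apply (rule finite_measure_finite_Union[OF fK])
    using K disjoint_level[of _ n] by (auto simp: sets_level disjoint_family_on_def subset_iff)
  then show ?thesis using measure_level by simp
qed

lemma sets_Union_levels: "(\<Union>k\<in>K. level n k) \<in> sets M" if "finite K"
  using that by (intro sets.finite_UN) (auto simp: sets_level)

lemma Union_levels_Int: "K \<subseteq> {..<h n} \<Longrightarrow> J \<subseteq> {..<h n} \<Longrightarrow>
    (\<Union>k\<in>K. level n k) \<inter> (\<Union>k\<in>J. level n k) = (\<Union>k\<in>K\<inter>J. level n k)"
  using disjoint_level[of _ n] by (auto simp: subset_iff) blast

lemma Union_levels_Suc: "K \<subseteq> {..<h n} \<Longrightarrow> \<exists>K'. K' \<subseteq> {..<h (Suc n)} \<and>
    (\<Union>k\<in>K. level n k) = (\<Union>k\<in>K'. level (Suc n) k)"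
proof -
  assume K: "K \<subseteq> {..<h n}"
  define K' where "K' = (\<lambda>(i,k). offset n i + k) ` ({..<p n} \<times> K)"
  have "K' \<subseteq> {..<h (Suc n)}" using K offset_add_less unfolding K'_def by auto
  moreover have "(\<Union>k\<in>K. level n k) = (\<Union>k\<in>K'. level (Suc n) k)"
    unfolding K'_def by (auto simp: level_eq_Union_Suc[of n])
  ultimately show ?thesis by blast
qed

lemma Union_levels_refine: "n0 \<le> n \<Longrightarrow> K \<subseteq> {..<h n0} \<Longrightarrow> \<exists>K'. K' \<subseteq> {..<h n} \<and>
    (\<Union>k\<in>K. level n0 k) = (\<Union>k\<in>K'. level n k)"
proof (induction n rule: dec_induct)
  case base
  then show ?case by blast
next
  case (step m)
  then obtain K' where "K' \<subseteq> {..<h m}" "(\<Union>k\<in>K. level n0 k) = (\<Union>k\<in>K'. level m k)" by blast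
  then show ?case using Union_levels_Suc[of K' m] by metis
qed

lemma tower_measure_le_1: "h n * \<beta> n \<le> 1"
proof -
  have "h n * \<beta> n = measure M (\<Union>k\<in>{..<h n}. level n k)"
      using measure_Union_levels[of "{..<h n}" n] by simp
  also have "\<dots> \<le> 1" by (rule prob_le_1)
  finally show ?thesis .
qed

lemma \<beta>_nonneg: "\<beta> n \<ge> 0" unfolding \<beta>_def by simp

lemma tower_measure_mono: "h n * \<beta> n \<le> h (Suc n) * \<beta> (Suc n)"
proof -
  have "h n * \<beta> n = (p n * h n) * \<beta> (Suc n)" using \<beta>_Suc[of n] by simp
  also have "\<dots> \<le> h (Suc n) * \<beta> (Suc n)"
    using h_Suc[of n] \<beta>_nonneg[of "Suc n"] by (intro mult_right_mono) auto
  finally show ?thesis .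
qed

text \<open>Level \<open>P\<close> of tower \<open>n + 2\<close> lies inside \<open>\<Union>k\<in>J. level n k\<close>.\<close>

definition lands_in :: "nat \<Rightarrow> nat set \<Rightarrow> nat \<Rightarrow> bool" where
  "lands_in n J P \<longleftrightarrow> (\<exists>j' i' k'. j' < p (Suc n) \<and> i' < p n \<and> k' \<in> J \<and>
    P = offset (Suc n) j' + offset n i' + k')"

lemma lands_in_offset_iff:
  assumes J: "J \<subseteq> {..<h n}" and j: "j < p (Suc n)" and i2: "i2 < p n" and k2: "k2 < h n"
  shows "lands_in n J (offset (Suc n) j + (offset n i2 + k2)) \<longleftrightarrow> k2 \<in> J"
proof
  assume "lands_in n J (offset (Suc n) j + (offset n i2 + k2))"
  then obtain j' i' k' where t: "j' < p (Suc n)" "i' < p n" "k' \<in> J"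
    "offset (Suc n) j + (offset n i2 + k2) = offset (Suc n) j' + (offset n i' + k')"
    unfolding lands_in_def by auto
  have k': "k' < h n" using t J by auto
  have "j = j' \<and> offset n i2 + k2 = offset n i' + k'"
    by (rule offset_add_inj[OF j t(1) offset_add_less[OF i2 k2] offset_add_less[OF t(2) k'] t(4)])
  then have "i2 = i' \<and> k2 = k'" using offset_add_inj[OF i2 t(2) k2 k'] by simp
  then show "k2 \<in> J" using t by simp
next
  assume "k2 \<in> J"
  then show "lands_in n J (offset (Suc n) j + (offset n i2 + k2))"
    unfolding lands_in_def using j i2 by (auto simp: add.assoc)
qed

lemma not_lands_in_spacer:
  assumes J: "J \<subseteq> {..<h n}" and j: "j < p (Suc n)" and i2: "i2 < p n" "q n \<le> i2"
  shows "\<not> lands_in n J (offset (Suc n) j + (offset n i2 + h n))"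
proof
  assume "lands_in n J (offset (Suc n) j + (offset n i2 + h n))"
  then obtain j' i' k' where t: "j' < p (Suc n)" "i' < p n" "k' \<in> J"
    "offset (Suc n) j + (offset n i2 + h n) = offset (Suc n) j' + (offset n i' + k')"
    unfolding lands_in_def by auto
  have k': "k' < h n" using t J by auto
  have b2: "offset n i2 + h n < h (Suc n)"
  proof -
    have "Suc i2 * h n \<le> p n * h n" using i2 by (intro mult_le_mono1) simp
    moreover have "i2 - q n < q n" using i2 p_eq_2q[of n] by simp
    ultimately show ?thesis unfolding offset_def h_Suc by simp
  qed
  have "j = j' \<and> offset n i2 + h n = offset n i' + k'"
    by (rule offset_add_inj[OF j t(1) b2 offset_add_less[OF t(2) k'] t(4)])
  then show False using offset_spacer_ne[OF i2 t(2) k'] by simp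
qed

lemma not_lands_in_spacer_Suc:
  assumes j: "j < p (Suc n)" "q (Suc n) \<le> j" and J: "J \<subseteq> {..<h n}"
  shows "\<not> lands_in n J (offset (Suc n) j + h (Suc n))"
proof
  assume "lands_in n J (offset (Suc n) j + h (Suc n))"
  then obtain j' i' k' where t: "j' < p (Suc n)" "i' < p n" "k' \<in> J"
    "offset (Suc n) j + h (Suc n) = offset (Suc n) j' + (offset n i' + k')"
    unfolding lands_in_def by (auto simp: add.assoc)
  have "k' < h n" using t J by auto
  then show False using offset_spacer_ne[OF j t(1) offset_add_less[OF t(2)]] t(4) by simp
qed

lemma offset_first_half: "a \<le> q n \<Longrightarrow> offset n a = a * h n"
  unfolding offset_def by simp

lemma first_half_decompose: "x < q n * h n \<Longrightarrow> x div h n < q n \<and> x = offset n (x div h n) + x mod h n"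
proof -
  assume x: "x < q n * h n"
  have "h n > 0" using h_ge_1[of n] by simp
  then have "x div h n < q n" using x by (simp add: div_less_iff_less_mult)
  moreover have "offset n (x div h n) = x div h n * h n" using offset_first_half calculation by simp
  ultimately show ?thesis by simp
qed

context
  fixes n m J j k
  assumes lq: "m * (h n + 1) \<le> q n" and J: "J \<subseteq> {..<h n}"
    and j: "j < p (Suc n)" and k: "k < h n"
begin

text \<open>\<open>shifted i\<close> is the level of tower \<open>n + 2\<close> to which \<open>T ^^ (l * h)\<close>, where \<open>l = m (h + 1)\<close>
  and \<open>h = h n\<close>, moves level \<open>offset (n + 1) j + offset n i + k\<close>. For \<open>i + l < q\<close> it lies in
  column \<open>i + l\<close> of tower \<open>n\<close>, for \<open>q \<le> i < p - m h\<close> (columns carrying a spacer) in column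
  \<open>i + m h\<close>, both times at height \<open>k\<close>. In between it crosses the spacers and has height
  \<open>(d h + k) mod (h + 1)\<close>; beyond \<open>p - m h\<close> it wraps into column \<open>j + 1\<close> of tower \<open>n + 1\<close> at
  height \<open>(e (h + 1) + k) mod h\<close> (shifted by one if column \<open>j\<close> carries a spacer). By coprimality
  these heights are equidistributed.\<close>

abbreviation shifted :: "nat \<Rightarrow> nat" where
  "shifted i \<equiv> offset (Suc n) j + offset n i + k + m * (h n + 1) * h n"

lemma mh_le_q: "m * h n \<le> q n"
  using lq by (metis add_lessD1 le_add1 le_trans mult_le_mono2 order_refl)

lemma lands_in_shift_low:
  assumes i: "i + m * (h n + 1) < q n"
  shows "lands_in n J (shifted i) \<longleftrightarrow> k \<in> J"
proof -
  have "offset n i + k + m * (h n + 1) * h n = offset n (i + m * (h n + 1)) + k"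
    using i offset_first_half[of i n] offset_first_half[of "i + m * (h n + 1)" n]
    by (simp add: algebra_simps)
  then have e: "shifted i = offset (Suc n) j + (offset n (i + m * (h n + 1)) + k)" by simp
  have "i + m * (h n + 1) < p n" using i p_eq_2q[of n] by simp
  then show ?thesis unfolding e by (rule lands_in_offset_iff[OF J j _ k])
qed

lemma lands_in_shift_high:
  assumes i: "q n \<le> i" "i + m * h n < p n"
  shows "lands_in n J (shifted i) \<longleftrightarrow> k \<in> J"
proof -
  have "offset n i + k + m * (h n + 1) * h n = offset n (i + m * h n) + k"
    using i unfolding offset_def by (simp add: algebra_simps)
  then have e: "shifted i = offset (Suc n) j + (offset n (i + m * h n) + k)" by simp
  show ?thesis unfolding e by (rule lands_in_offset_iff[OF J j i(2) k])
qed

lemma lands_in_shift_transition: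
  assumes i: "q n \<le> i + m * (h n + 1)" "i < q n"
  shows "lands_in n J (shifted i) \<longleftrightarrow>
    ((i + m * (h n + 1) - q n) * h n + k) mod (h n + 1) \<in> J"
proof -
  define d where "d = i + m * (h n + 1) - q n"
  define c where "c = (d * h n + k) div (h n + 1)"
  define r where "r = (d * h n + k) mod (h n + 1)"
  have dl: "d < m * (h n + 1)" using i unfolding d_def by simp
  have dr: "d * h n + k = c * (h n + 1) + r" unfolding c_def r_def by (metis div_mult_mod_eq)
  have "d * h n + k < (d + 1) * (h n + 1)" using k by (simp add: algebra_simps)
  then have "(d * h n + k) div (h n + 1) < d + 1" by (rule less_mult_imp_div_less)
  then have cd: "c \<le> d" unfolding c_def by simp
  have cp: "q n + c < p n" using cd dl lq p_eq_2q[of n] by simp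
  have rh: "r \<le> h n" unfolding r_def by simp
  have "offset n i + k + m * (h n + 1) * h n = (i + m * (h n + 1)) * h n + k"
    using offset_first_half[of i n] i by (simp add: algebra_simps)
  also have "\<dots> = q n * h n + (d * h n + k)"
  proof -
    have "i + m * (h n + 1) = q n + d" using i unfolding d_def by simp
    then show ?thesis by (simp add: algebra_simps)
  qed
  also have "\<dots> = offset n (q n + c) + r" unfolding dr offset_def by (simp add: algebra_simps)
  finally have e: "shifted i = offset (Suc n) j + (offset n (q n + c) + r)"
    by simp
  show ?thesis
  proof (cases "r < h n")
    case True
    show ?thesis unfolding e using lands_in_offset_iff[OF J j cp True] by (simp add: r_def d_def)
  next
    case False
    then have "r = h n" using rh by simp
    moreover have "h n \<notin> J" using J by auto
    ultimately show ?thesis unfolding e using not_lands_in_spacer[OF J j cp]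
        by (simp add: r_def d_def)
  qed
qed

lemma shift_wrap_position:
  assumes i: "p n - m * h n \<le> i" "i < p n"
  shows "offset n i + k + m * (h n + 1) * h n = h (Suc n) + ((i - (p n - m * h n)) * (h n + 1) + k)"
proof -
  define e where "e = i - (p n - m * h n)"
  define a where "a = i - q n"
  have iq: "i = q n + a" using i mh_le_q p_eq_2q[of n] unfolding a_def by simp
  have ae: "a + m * h n = q n + e" using i mh_le_q p_eq_2q[of n] unfolding a_def e_def by simp
  have "offset n i + k + m * (h n + 1) * h n = (q n + a) * h n + a + k + m * (h n + 1) * h n"
    unfolding offset_def using iq by simp
  also have "\<dots> = q n * h n + (a + m * h n) * h n + (a + m * h n) + k"
    by (simp add: algebra_simps)
  also have "\<dots> = q n * h n + (q n + e) * h n + (q n + e) + k" unfolding ae ..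
  also have "\<dots> = h (Suc n) + (e * (h n + 1) + k)"
    unfolding h_Suc p_eq_2q[of n] by (simp add: algebra_simps)
  finally show ?thesis unfolding e_def .
qed

lemma shift_wrap_bound:
  assumes i: "p n - m * h n \<le> i" "i < p n"
  shows "(i - (p n - m * h n)) * (h n + 1) + k < q n * h n"
proof -
  define e where "e = i - (p n - m * h n)"
  have "e < m * h n" using i mh_le_q p_eq_2q[of n] unfolding e_def by simp
  then have "Suc e \<le> m * h n" by simp
  then have "Suc e * (h n + 1) \<le> m * h n * (h n + 1)" by (rule mult_le_mono1)
  also have "\<dots> = m * (h n + 1) * h n" by (simp add: algebra_simps)
  also have "\<dots> \<le> q n * h n" using lq by (rule mult_le_mono1)
  finally have "Suc e * (h n + 1) \<le> q n * h n" .
  then show ?thesis using k unfolding e_def[symmetric] by (simp add: algebra_simps)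
qed

lemma lands_in_shift_wrap:
  assumes i: "p n - m * h n \<le> i" "i < p n" and jj: "Suc j < p (Suc n)" "j < q (Suc n)"
  shows "lands_in n J (shifted i) \<longleftrightarrow>
     ((i - (p n - m * h n)) * (h n + 1) + k) mod h n \<in> J"
proof -
  define x where "x = (i - (p n - m * h n)) * (h n + 1) + k"
  have xq: "x < q n * h n" using shift_wrap_bound[OF i] unfolding x_def .
  have os: "offset (Suc n) (Suc j) = offset (Suc n) j + h (Suc n)"
    using offset_Suc[of j "Suc n"] jj s_eq_q[of j "Suc n"] by simp
  have e: "shifted i = offset (Suc n) (Suc j) + (offset n (x div h n) + x mod h n)"
    using shift_wrap_position[OF i] first_half_decompose[OF xq] os unfolding x_def by simp
  have "x div h n < p n" using first_half_decompose[OF xq] p_eq_2q[of n] by simp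
  moreover have "x mod h n < h n" using h_ge_1[of n] by simp
  ultimately show ?thesis unfolding e x_def[symmetric] by (rule lands_in_offset_iff[OF J jj(1)])
qed

lemma lands_in_shift_wrap_spacer:
  assumes i: "p n - m * h n \<le> i" "i < p n" and jj: "Suc j < p (Suc n)" "q (Suc n) \<le> j"
  shows "lands_in n J (shifted i) \<longleftrightarrow>
     (1 \<le> (i - (p n - m * h n)) * (h n + 1) + k \<and>
      ((i - (p n - m * h n)) * (h n + 1) + k - 1) mod h n \<in> J)"
proof -
  define x where "x = (i - (p n - m * h n)) * (h n + 1) + k"
  have xq: "x < q n * h n" using shift_wrap_bound[OF i] unfolding x_def .
  have os: "offset (Suc n) (Suc j) = offset (Suc n) j + h (Suc n) + 1"
    using offset_Suc[of j "Suc n"] jj s_eq_q[of j "Suc n"] by simp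
  show ?thesis
  proof (cases "x = 0")
    case True
    have e: "shifted i = offset (Suc n) j + h (Suc n)"
      using shift_wrap_position[OF i] True unfolding x_def by simp
    show ?thesis unfolding e x_def[symmetric]
        using not_lands_in_spacer_Suc[OF _ jj(2) J] jj True by simp
  next
    case False
    have xq': "x - 1 < q n * h n" using xq by simp
    have d: "offset n i + k + m * (h n + 1) * h n = h (Suc n) + x"
      using shift_wrap_position[OF i] unfolding x_def .
    have h2: "x - 1 = offset n ((x - 1) div h n) + (x - 1) mod h n"
        using first_half_decompose[OF xq'] by simp
    have e: "shifted i = offset (Suc n) (Suc j) + (offset n ((x - 1) div h n) + (x - 1) mod h n)"
      using d h2 os False by linarith
    have "(x - 1) div h n < p n" using first_half_decompose[OF xq'] p_eq_2q[of n] by simp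
    moreover have "(x - 1) mod h n < h n" using h_ge_1[of n] by simp
    ultimately show ?thesis unfolding e x_def[symmetric]
        using lands_in_offset_iff[OF J jj(1)] False by simp
  qed
qed

lemma card_lands_in_transition:
  "card {i. q n - m * (h n + 1) \<le> i \<and> i < q n - m * (h n + 1) + m * (h n + 1) \<and>
      lands_in n J (shifted i)} = m * card J"
proof -
  let ?l = "m * (h n + 1)"
  have "card {i. q n - ?l \<le> i \<and> i < q n - ?l + ?l \<and> lands_in n J (shifted i)}
      = card {d. d < ?l \<and> lands_in n J (shifted (q n - m * (h n + 1) + d))}"
    by (rule card_shifted_interval)
  also have "{d. d < ?l \<and> lands_in n J (shifted (q n - m * (h n + 1) + d))}
      = {d. d < ?l \<and> (d * h n + k) mod (h n + 1) \<in> J}"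
  proof -
    have "lands_in n J (shifted (q n - m * (h n + 1) + d)) \<longleftrightarrow> (d * h n + k) mod (h n + 1) \<in> J"
        if d: "d < ?l" for d
      using lands_in_shift_transition[of "q n - ?l + d"] d lq by simp
    then show ?thesis by blast
  qed
  also have "card \<dots> = m * card J"
    by (rule card_mult_add_mod_in_periods) (use J in auto)
  finally show ?thesis .
qed

lemma card_lands_in_wrap_no_spacer:
  assumes jj: "Suc j < p (Suc n)" "j < q (Suc n)"
  shows "card {e. e < m * h n \<and> lands_in n J (shifted (p n - m * h n + e))} = m * card J"
proof -
  have "lands_in n J (shifted (p n - m * h n + e)) \<longleftrightarrow> (e * (h n + 1) + k) mod h n \<in> J"
      if "e < m * h n" for e
    using lands_in_shift_wrap[OF _ _ jj, of "p n - m * h n + e"] that mh_le_q p_eq_2q[of n] by simp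
  then have "{e. e < m * h n \<and> lands_in n J (shifted (p n - m * h n + e))} = {e. e
      < m * h n \<and> (e * (h n + 1) + k) mod h n \<in> J}"
    by blast
  also have "card \<dots> = m * card J" by (rule card_mult_add_mod_in_periods) (use J in auto)
  finally show ?thesis .
qed

text \<open>After a spacer the residues are shifted by one, which costs at most one column at \<open>e = 0\<close>.\<close>

lemma card_lands_in_wrap_spacer:
  assumes jj: "Suc j < p (Suc n)" "q (Suc n) \<le> j"
  defines "X \<equiv> {e. e < m * h n \<and> lands_in n J (shifted (p n - m * h n + e))}"
  shows "card X \<le> m * card J" and "m * card J \<le> card X + 1"
proof -
  define Y where "Y = {e. e < m * h n \<and> (e * (h n + 1) + (k + h n - 1)) mod h n \<in> J}"
  have X: "X = {e. e < m * h n \<and> 1 \<le> e * (h n + 1) + k \<and> (e * (h n + 1) + k - 1) mod h n \<in> J}"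
  proof -
    have "lands_in n J (shifted (p n - m * h n + e)) \<longleftrightarrow> 1
        \<le> e * (h n + 1) + k \<and> (e * (h n + 1) + k - 1) mod h n \<in> J"
      if "e < m * h n" for e
      using lands_in_shift_wrap_spacer[OF _ _ jj, of "p n - m * h n + e"] that mh_le_q p_eq_2q[of n]
      by simp
    then show ?thesis unfolding X_def by blast
  qed
  have modeq: "(e * (h n + 1) + k - 1) mod h n = (e * (h n + 1) + (k + h n - 1)) mod h n"
    if "1 \<le> e * (h n + 1) + k" for e
  proof -
    have "e * (h n + 1) + (k + h n - 1) = (e * (h n + 1) + k - 1) + h n" using that h_ge_1[of n]
        by simp
    then show ?thesis by simp
  qed
  have XY: "X \<subseteq> Y" unfolding X Y_def using modeq by auto
  have YX: "Y \<subseteq> insert 0 X"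
  proof
    fix e assume e: "e \<in> Y"
    show "e \<in> insert 0 X"
    proof (cases "e = 0")
      case False
      then have "1 \<le> e * (h n + 1) + k" by simp
      then show ?thesis using e modeq[of e] unfolding X Y_def by auto
    qed simp
  qed
  have cY: "card Y = m * card J" unfolding Y_def
      by (rule card_mult_add_mod_in_periods) (use J in auto)
  have fX: "finite X" unfolding X_def by auto
  have "finite Y" unfolding Y_def by auto
  then show "card X \<le> m * card J" using XY cY card_mono by metis
  have "card Y \<le> card (insert 0 X)" using YX fX by (intro card_mono) auto
  also have "\<dots> \<le> card X + 1" using fX by (simp add: card_insert_if)
  finally show "m * card J \<le> card X + 1" using cY by simp
qed

lemma card_lands_in_column:
  assumes jj: "Suc j < p (Suc n)"
  defines "S \<equiv> {i. i < p n \<and> lands_in n J (shifted i)}"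
    and "c \<equiv> (if k \<in> J then (q n - m * (h n + 1)) + (q n - m * h n) else 0) + 2 * m * card J"
  shows "card S \<le> c" "c \<le> card S + 1"
proof -
  let ?l = "m * (h n + 1)"
  define S1 where "S1 = {i. i < q n - ?l \<and> lands_in n J (shifted i)}"
  define S2 where "S2 = {i. q n - ?l \<le> i \<and> i < (q n - ?l) + ?l \<and> lands_in n J (shifted i)}"
  define S3 where "S3 = {i. q n \<le> i \<and> i < p n - m * h n \<and> lands_in n J (shifted i)}"
  define S4 where "S4 = {i. p n - m * h n \<le> i \<and> i
      < (p n - m * h n) + m * h n \<and> lands_in n J (shifted i)}"
  have S: "S = S1 \<union> S2 \<union> S3 \<union> S4"
    unfolding S_def S1_def S2_def S3_def S4_def using lq mh_le_q p_eq_2q[of n] by auto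
  have fin: "finite S1" "finite S2" "finite S3" "finite S4"
    unfolding S1_def S2_def S3_def S4_def by auto
  have disj: "S1 \<inter> S2 = {}" "(S1 \<union> S2) \<inter> S3 = {}" "(S1 \<union> S2 \<union> S3) \<inter> S4 = {}"
    unfolding S1_def S2_def S3_def S4_def using lq mh_le_q p_eq_2q[of n] by auto
  have cS: "card S = card S1 + card S2 + card S3 + card S4"
    unfolding S using card_Un_disjoint[OF _ _ disj(1)] card_Un_disjoint[OF _ _ disj(2)]
      card_Un_disjoint[OF _ _ disj(3)] fin by simp
  have "S1 = (if k \<in> J then {..<q n - ?l} else {})"
    unfolding S1_def using lands_in_shift_low by auto
  then have c1: "card S1 = (if k \<in> J then q n - ?l else 0)" by simp
  have "S3 = (if k \<in> J then {q n..<p n - m * h n} else {})"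
    unfolding S3_def using lands_in_shift_high by auto
  then have c3: "card S3 = (if k \<in> J then q n - m * h n else 0)" using p_eq_2q[of n] by simp
  have c2: "card S2 = m * card J"
    unfolding S2_def by (rule card_lands_in_transition)
  have "card S4 = card {e. e < m * h n \<and> lands_in n J (shifted (p n - m * h n + e))}"
    unfolding S4_def by (rule card_shifted_interval)
  then have c4: "card S4 \<le> m * card J \<and> m * card J \<le> card S4 + 1"
  proof (cases "j < q (Suc n)")
    case True
    then show ?thesis using card_lands_in_wrap_no_spacer[OF jj] \<open>card S4 = _\<close> by simp
  next
    case False
    then show ?thesis using card_lands_in_wrap_spacer[OF jj] \<open>card S4 = _\<close> by simp
  qed
  show "card S \<le> c" "c \<le> card S + 1" unfolding cS c_def using c1 c2 c3 c4 by auto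
qed

end

lemma level_eq_Union_Suc_Suc: "level n k
    = (\<Union>j<p (Suc n). \<Union>i<p n. level (Suc (Suc n)) (offset (Suc n) j + offset n i + k))"
  unfolding level_eq_Union_Suc[of n k] level_eq_Union_Suc[of "Suc n"] by (auto simp: add.assoc)

lemma offset2_add_less: "i < p n \<Longrightarrow> j < p (Suc n) \<Longrightarrow> k < h n \<Longrightarrow>
    offset (Suc n) j + offset n i + k < h (Suc (Suc n))"
  using offset_add_less[of j "Suc n" "offset n i + k"] offset_add_less[of i n k]
  by (simp add: add.assoc)

lemma offset2_add_inj: "i < p n \<Longrightarrow> j < p (Suc n) \<Longrightarrow> k < h n \<Longrightarrow>
    i' < p n \<Longrightarrow> j' < p (Suc n) \<Longrightarrow> k' < h n \<Longrightarrow>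
    offset (Suc n) j + offset n i + k = offset (Suc n) j' + offset n i' + k' \<Longrightarrow>
    j = j' \<and> i = i' \<and> k = k'"
  using offset_add_inj[of j "Suc n" j' "offset n i + k" "offset n i' + k'"]
    offset_add_less[of i n k] offset_add_less[of i' n k'] offset_add_inj[of i n i' k k']
  by (simp add: add.assoc)

lemma inj_on_offset2:
  assumes "K \<subseteq> {..<h n}"
  shows "inj_on (\<lambda>(k, j, i). offset (Suc n) j + offset n i + k) (K \<times> ({..<p (Suc n)} \<times> {..<p n}))"
proof (rule inj_onI)
  fix x y
  assume xy: "x \<in> K \<times> ({..<p (Suc n)} \<times> {..<p n})" "y \<in> K \<times> ({..<p (Suc n)} \<times> {..<p n})"
    and eq: "(\<lambda>(k, j, i). offset (Suc n) j + offset n i + k) x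
      = (\<lambda>(k, j, i). offset (Suc n) j + offset n i + k) y"
  obtain k j i where x: "x = (k, j, i)" by (cases x) auto
  obtain k' j' i' where y: "y = (k', j', i')" by (cases y) auto
  have "j = j' \<and> i = i' \<and> k = k'"
    by (rule offset2_add_inj[of i n j k i' j' k']) (use xy eq assms in \<open>auto simp: x y\<close>)
  then show "x = y" using x y by simp
qed

lemma image_level: "(T ^^ N) ` level n a = level n (a + N)"
  unfolding level_def using image_funpow_T_add[of N a] by (simp add: add.commute)

lemma measure_shift_decompose:
  assumes K: "K \<subseteq> {..<h n}" and J: "J \<subseteq> {..<h n}"
  shows "measure M ((T ^^ N) ` (\<Union>k\<in>K. level n k) \<inter> (\<Union>k\<in>J. level n k)) =
    (\<Sum>k\<in>K. \<Sum>j<p (Suc n). \<Sum>i<p n.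
       measure M (level (Suc (Suc n)) (offset (Suc n) j + offset n i + k + N) \<inter> (\<Union>k\<in>J. level n k)))"
proof -
  define F where "F = (\<Union>k\<in>J. level n k)"
  define Tr where "Tr = K \<times> ({..<p (Suc n)} \<times> {..<p n})"
  define U where "U = (\<lambda>(k, j, i). offset (Suc n) j + offset n i + k)"
  have fK: "finite K" using K finite_subset by blast
  have fTr: "finite Tr" unfolding Tr_def using fK by simp
  have UB: "x \<in> Tr \<Longrightarrow> U x < h (Suc (Suc n))" for x
    using K offset2_add_less unfolding Tr_def U_def by auto
  have Uinj: "inj_on U Tr" unfolding Tr_def U_def by (rule inj_on_offset2[OF K])
  have E: "(\<Union>k\<in>K. level n k) = (\<Union>x\<in>Tr. level (Suc (Suc n)) (U x))"
    unfolding Tr_def U_def level_eq_Union_Suc_Suc[of n] by fastforce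
  have "(T ^^ N) ` (\<Union>k\<in>K. level n k) \<inter> F = (\<Union>x\<in>Tr. level (Suc (Suc n)) (U x + N) \<inter> F)"
    unfolding E image_UN image_level by auto
  then have "measure M ((T ^^ N) ` (\<Union>k\<in>K. level n k) \<inter> F) =
      measure M (\<Union>x\<in>Tr. level (Suc (Suc n)) (U x + N) \<inter> F)" by simp
  also have "\<dots> = (\<Sum>x\<in>Tr. measure M (level (Suc (Suc n)) (U x + N) \<inter> F))"
  proof (rule finite_measure_finite_Union[OF fTr])
    show "(\<lambda>x. level (Suc (Suc n)) (U x + N) \<inter> F) ` Tr \<subseteq> sets M"
      unfolding F_def using J finite_subset[OF J]
      by (auto intro!: sets.Int sets_Union_levels simp: sets_level)
    show "disjoint_family_on (\<lambda>x. level (Suc (Suc n)) (U x + N) \<inter> F) Tr"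
    proof (unfold disjoint_family_on_def, intro ballI impI)
      fix x y assume xy: "x \<in> Tr" "y \<in> Tr" "x \<noteq> y"
      then have "U x \<noteq> U y" using inj_onD[OF Uinj] by blast
      then have "level (Suc (Suc n)) (U x) \<inter> level (Suc (Suc n)) (U y) = {}"
        using disjoint_level UB xy by blast
      then have "(T ^^ N) ` level (Suc (Suc n)) (U x) \<inter> (T ^^ N) ` level (Suc (Suc n)) (U y) = {}"
        by (intro image_funpow_T_disjoint level_subset_space)
      then show "(level (Suc (Suc n)) (U x + N) \<inter> F) \<inter> (level (Suc (Suc n)) (U y + N) \<inter> F) = {}"
        unfolding image_level by blast
    qed
  qed
  also have "\<dots> = (\<Sum>k\<in>K. \<Sum>j<p (Suc n). \<Sum>i<p n.
       measure M (level (Suc (Suc n)) (offset (Suc n) j + offset n i + k + N) \<inter> F))"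
    unfolding Tr_def U_def by (simp add: sum.cartesian_product split_def)
  finally show ?thesis unfolding F_def .
qed

lemma measure_level_lands_in:
  assumes J: "J \<subseteq> {..<h n}" and t: "lands_in n J P"
  shows "measure M (level (Suc (Suc n)) P \<inter> (\<Union>k\<in>J. level n k)) = \<beta> (Suc (Suc n))"
proof -
  obtain j' i' k' where t: "j' < p (Suc n)" "i' < p n" "k' \<in> J"
    "P = offset (Suc n) j' + offset n i' + k'" using t unfolding lands_in_def by auto
  have "level (Suc (Suc n)) P \<subseteq> level n k'" unfolding level_eq_Union_Suc_Suc[of n k'] using t
      by auto
  then have "level (Suc (Suc n)) P \<inter> (\<Union>k\<in>J. level n k) = level (Suc (Suc n)) P" using t by auto
  then show ?thesis using measure_level by simp
qed

lemma measure_level_not_lands_in: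
  assumes J: "J \<subseteq> {..<h n}" and t: "\<not> lands_in n J P" and P: "P < h (Suc (Suc n))"
  shows "measure M (level (Suc (Suc n)) P \<inter> (\<Union>k\<in>J. level n k)) = 0"
proof -
  have "level (Suc (Suc n)) P \<inter> (\<Union>k\<in>J. level n k) = {}"
  proof -
    have "level (Suc (Suc n)) P \<inter> level (Suc (Suc n)) (offset (Suc n) j + offset n i + k) = {}"
      if "k \<in> J" "j < p (Suc n)" "i < p n" for k j i
    proof -
      have "offset (Suc n) j + offset n i + k \<noteq> P" using t that unfolding lands_in_def by blast
      moreover have "offset (Suc n) j + offset n i + k < h (Suc (Suc n))"
          using offset2_add_less that J by auto
      ultimately show ?thesis using disjoint_level P by blast
    qed
    then show ?thesis unfolding level_eq_Union_Suc_Suc[of n] by blast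
  qed
  then show ?thesis by simp
qed

lemma measure_level_Int_le: "measure M (level (Suc (Suc n)) P \<inter> X) \<le> \<beta> (Suc (Suc n))"
  using finite_measure_mono[OF Int_lower1 sets_level] measure_level by simp

lemma column_sum_eq:
  assumes J: "J \<subseteq> {..<h n}" and lq: "m * (h n + 1) \<le> q n" and jj: "Suc j < p (Suc n)"
      and k: "k < h n"
  shows "(\<Sum>i<p n. measure M (level (Suc (Suc n))
      (offset (Suc n) j + offset n i + k + m * (h n + 1) * h n) \<inter> (\<Union>k\<in>J. level n k)))
    = \<beta> (Suc (Suc n)) * card {i. i < p n
        \<and> lands_in n J (offset (Suc n) j + offset n i + k + m * (h n + 1) * h n)}"
proof -
  let ?N = "m * (h n + 1) * h n"
  let ?g = "\<lambda>i. measure M (level (Suc (Suc n)) (offset (Suc n) j + offset n i + k + ?N)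
      \<inter> (\<Union>k\<in>J. level n k))"
  let ?P = "\<lambda>i. lands_in n J (offset (Suc n) j + offset n i + k + ?N)"
  have NH: "?N + 1 \<le> h (Suc n)"
  proof -
    have "?N \<le> q n * h n" using lq by (rule mult_le_mono1)
    moreover have "p n * h n = 2 * (q n * h n)" using p_eq_2q[of n] by simp
    ultimately show ?thesis using h_Suc[of n] q_ge_1[of n] by linarith
  qed
  have pb: "offset (Suc n) j + offset n i + k + ?N < h (Suc (Suc n))" if i: "i < p n" for i
  proof -
    have "offset n i + k < h (Suc n)" using offset_add_less[OF i k] .
    moreover have "offset (Suc n) j + h (Suc n) \<le> offset (Suc n) (Suc j)"
        using offset_mono[of j "Suc j" "Suc n"] by simp
    moreover have "offset (Suc n) (Suc j) + (h (Suc n) - 1) < h (Suc (Suc n))"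
      using offset_add_less[OF jj, of "h (Suc n) - 1"] h_ge_1[of "Suc n"] by simp
    ultimately show ?thesis using NH by linarith
  qed
  have "?g i = (if ?P i then \<beta> (Suc (Suc n)) else 0)" if "i < p n" for i
    using measure_level_lands_in[OF J] measure_level_not_lands_in[OF J _ pb[OF that]] by auto
  then have "(\<Sum>i<p n. ?g i) = (\<Sum>i<p n. if ?P i then \<beta> (Suc (Suc n)) else 0)" by simp
  also have "\<dots> = (\<Sum>i\<in>{i\<in>{..<p n}. ?P i}. \<beta> (Suc (Suc n)))"
      by (rule sum.inter_filter[symmetric]) simp
  also have "{i\<in>{..<p n}. ?P i} = {i. i < p n \<and> ?P i}" by auto
  finally show ?thesis by simp
qed

lemma column_sum_le:
  "0 \<le> (\<Sum>i<p n. measure M (level (Suc (Suc n)) (offset (Suc n) j + offset n i + k + N) \<inter> X))"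
  "(\<Sum>i<p n. measure M (level (Suc (Suc n)) (offset (Suc n) j + offset n i + k + N) \<inter> X))
      \<le> p n * \<beta> (Suc (Suc n))"
proof -
  show "0 \<le> (\<Sum>i<p n. measure M (level (Suc (Suc n)) (offset (Suc n) j + offset n i + k + N) \<inter> X))"
    by (simp add: sum_nonneg)
  have "(\<Sum>i<p n. measure M (level (Suc (Suc n)) (offset (Suc n) j + offset n i + k + N) \<inter> X))
      \<le> (\<Sum>i<p n. \<beta> (Suc (Suc n)))"
    by (rule sum_mono) (rule measure_level_Int_le)
  then show "(\<Sum>i<p n. measure M (level (Suc (Suc n)) (offset (Suc n) j + offset n i + k + N)
      \<inter> X)) \<le> p n * \<beta> (Suc (Suc n))"
    by simp
qed

text \<open>Only the last column of tower \<open>n + 1\<close> escapes the count: its shifted levels leave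
  tower \<open>n + 2\<close>, so it is merely bounded by \<open>p n\<close> levels.\<close>

lemma sum_columns_bounds:
  assumes J: "J \<subseteq> {..<h n}" and lq: "m * (h n + 1) \<le> q n" and k: "k < h n"
  defines "c \<equiv> (if k \<in> J then (q n - m * (h n + 1)) + (q n - m * h n) else 0) + 2 * m * card J"
    and "G \<equiv> \<lambda>j. \<Sum>i<p n. measure M (level (Suc (Suc n))
      (offset (Suc n) j + offset n i + k + m * (h n + 1) * h n) \<inter> (\<Union>k\<in>J. level n k))"
  shows "(p (Suc n) - 1) * \<beta> (Suc (Suc n)) * (real c - 1) \<le> (\<Sum>j<p (Suc n). G j)"
    and "(\<Sum>j<p (Suc n). G j) \<le> (p (Suc n) - 1) * \<beta> (Suc (Suc n)) * real c + p n * \<beta> (Suc (Suc n))"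
proof -
  let ?b = "\<beta> (Suc (Suc n))" and ?p' = "p (Suc n)"
  let ?S = "\<lambda>j. {i. i < p n \<and> lands_in n J
      (offset (Suc n) j + offset n i + k + m * (h n + 1) * h n)}"
  have split: "(\<Sum>j<?p'. G j) = (\<Sum>j<?p' - 1. G j) + G (?p' - 1)"
    using p_ge_2[of "Suc n"] by (metis Suc_diff_1 less_le_trans pos2 sum.lessThan_Suc)
  have Gj: "G j = ?b * card (?S j)" and cj: "real c - 1 \<le> card (?S j)" "card (?S j) \<le> real c"
    if j: "j < ?p' - 1" for j
  proof -
    have jj: "Suc j < ?p'" "j < ?p'" using j by auto
    show "G j = ?b * card (?S j)" unfolding G_def by (rule column_sum_eq[OF J lq jj(1) k])
    show "real c - 1 \<le> card (?S j)" "card (?S j) \<le> real c"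
      using card_lands_in_column[OF lq J jj(2) k jj(1)] unfolding c_def by linarith+
  qed
  have "(\<Sum>j<?p' - 1. ?b * (real c - 1)) \<le> (\<Sum>j<?p' - 1. G j)"
    by (rule sum_mono) (use cj Gj \<beta>_nonneg in \<open>auto intro: mult_left_mono\<close>)
  moreover have "(\<Sum>j<?p' - 1. G j) \<le> (\<Sum>j<?p' - 1. ?b * real c)"
    by (rule sum_mono) (use cj Gj \<beta>_nonneg in \<open>auto intro: mult_left_mono\<close>)
  moreover have "0 \<le> G (?p' - 1)" "G (?p' - 1) \<le> p n * ?b"
    unfolding G_def by (rule column_sum_le)+
  ultimately show "(?p' - 1) * ?b * (real c - 1) \<le> (\<Sum>j<?p'. G j)"
    and "(\<Sum>j<?p'. G j) \<le> (?p' - 1) * ?b * real c + p n * ?b"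
    using split p_ge_2[of "Suc n"] by (simp_all add: algebra_simps of_nat_diff)
qed

lemma measure_shift_bounds:
  fixes S :: real
  assumes K: "K \<subseteq> {..<h n}" and J: "J \<subseteq> {..<h n}" and lq: "m * (h n + 1) \<le> q n"
  defines "A \<equiv> (q n - m * (h n + 1)) + (q n - m * h n)"
  defines "S \<equiv> real (card (K \<inter> J) * A + card K * (2 * m * card J))"
  defines "\<mu> \<equiv> measure M ((T ^^ (m * (h n + 1) * h n)) ` (\<Union>k\<in>K. level n k) \<inter> (\<Union>k\<in>J. level n k))"
  shows "(p (Suc n) - 1) * \<beta> (Suc (Suc n)) * (S - card K) \<le> \<mu>"
    "\<mu> \<le> (p (Suc n) - 1) * \<beta> (Suc (Suc n)) * S + p n * \<beta> (Suc (Suc n)) * card K"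
proof -
  let ?b = "\<beta> (Suc (Suc n))" and ?p' = "p (Suc n)"
  define c where "c k = (if k \<in> J then A else 0) + 2 * m * card J" for k
  define G where "G k j = (\<Sum>i<p n. measure M (level (Suc (Suc n))
      (offset (Suc n) j + offset n i + k + m * (h n + 1) * h n) \<inter> (\<Union>k\<in>J. level n k)))" for k j
  have \<mu>: "\<mu> = (\<Sum>k\<in>K. \<Sum>j<?p'. G k j)" unfolding \<mu>_def G_def
      by (rule measure_shift_decompose[OF K J])
  have bounds: "(?p' - 1) * ?b * (real (c k) - 1) \<le> (\<Sum>j<?p'. G k j)"
      "(\<Sum>j<?p'. G k j) \<le> (?p' - 1) * ?b * real (c k) + p n * ?b" if "k \<in> K" for k
    using sum_columns_bounds[OF J lq, of k] that K unfolding c_def A_def G_def by auto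
  have "(\<Sum>k\<in>K. real (c k)) = (\<Sum>k\<in>K. (if k \<in> J then real A else 0)) + (\<Sum>k\<in>K. real (2 * m * card J))"
    unfolding c_def by (simp add: sum.distrib if_distrib[where f=real] cong: if_cong)
  also have "(\<Sum>k\<in>K. (if k \<in> J then real A else 0)) = real (card (K \<inter> J)) * real A"
    using finite_subset[OF K] by (simp add: sum.If_cases Int_def)
  finally have sc: "(\<Sum>k\<in>K. real (c k)) = S" unfolding S_def by simp
  have "(\<Sum>k\<in>K. (?p' - 1) * ?b * (real (c k) - 1)) \<le> \<mu>"
    unfolding \<mu> by (rule sum_mono) (use bounds in blast)
  moreover have "(\<Sum>k\<in>K. (?p' - 1) * ?b * (real (c k) - 1)) = (?p' - 1) * ?b * (S - card K)"
    using sc by (simp add: sum_distrib_left[symmetric] sum_subtractf)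
  ultimately show "(?p' - 1) * ?b * (S - card K) \<le> \<mu>" by simp
  have "\<mu> \<le> (\<Sum>k\<in>K. (?p' - 1) * ?b * real (c k) + p n * ?b)"
    unfolding \<mu> by (rule sum_mono) (use bounds in blast)
  moreover have "(\<Sum>k\<in>K. (?p' - 1) * ?b * real (c k) + p n * ?b)
      = (?p' - 1) * ?b * S + p n * ?b * card K"
    using sc by (simp add: sum.distrib sum_distrib_left[symmetric])
  ultimately show "\<mu> \<le> (?p' - 1) * ?b * S + p n * ?b * card K" by simp
qed

end

lemma shift_sandwich:
  fixes P P' H \<beta> cK S \<mu> :: real
  assumes P: "P \<ge> 1" and P': "P' \<ge> 1" and \<beta>: "\<beta> \<ge> 0" "H * \<beta> \<le> 1" and cK: "0 \<le> cK" "cK \<le> H"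
    and lo: "(P' - 1) * (\<beta> / (P * P')) * (S - cK) \<le> \<mu>"
    and hi: "\<mu> \<le> (P' - 1) * (\<beta> / (P * P')) * S + P * (\<beta> / (P * P')) * cK"
  shows "\<bar>\<mu> - (P' - 1) * (\<beta> / (P * P')) * S\<bar> \<le> 1 / P + 1 / P'"
proof -
  have bk: "\<beta> * cK \<le> 1" using mult_left_mono[OF cK(2) \<beta>(1)] \<beta>(2) by (simp add: mult.commute)
  have "(P' - 1) * (\<beta> / (P * P')) * cK = ((P' - 1) / P') * (\<beta> * cK) / P"
    using P P' by (simp add: field_simps)
  also have "\<dots> \<le> 1 * 1 / P" using P P' bk \<beta> cK
    by (intro divide_right_mono mult_mono) (auto simp: field_simps)
  finally have e1: "(P' - 1) * (\<beta> / (P * P')) * cK \<le> 1 / P" by simp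
  have "P * (\<beta> / (P * P')) * cK = (\<beta> * cK) / P'" using P P' by (simp add: field_simps)
  also have "\<dots> \<le> 1 / P'" using P' bk by (intro divide_right_mono) auto
  finally have e2: "P * (\<beta> / (P * P')) * cK \<le> 1 / P'" .
  have "0 \<le> (P' - 1) * (\<beta> / (P * P')) * cK" "0 \<le> P * (\<beta> / (P * P')) * cK"
    using P P' \<beta> cK by auto
  then show ?thesis using lo hi e1 e2 by (simp add: right_diff_distrib)
qed

lemma shift_estimate:
  fixes P P' H \<beta> L m cK cKJ cJ \<mu> \<alpha> S :: real
  assumes P: "P \<ge> 1" and P': "P' \<ge> 1" and H: "H \<ge> 1" and \<beta>: "\<beta> \<ge> 0" "H * \<beta> \<le> 1"
    and L: "L = m * (H + 1)"
    and cK: "0 \<le> cK" "cK \<le> H" and cKJ: "0 \<le> cKJ" "cKJ \<le> H" and cJ: "0 \<le> cJ" "cJ \<le> H"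
    and S: "S = cKJ * (P - L - m * H) + cK * (2 * m * cJ)"
    and lo: "(P' - 1) * (\<beta> / (P * P')) * (S - cK) \<le> \<mu>"
    and hi: "\<mu> \<le> (P' - 1) * (\<beta> / (P * P')) * S + P * (\<beta> / (P * P')) * cK"
  shows "\<bar>\<mu> - ((1 - \<alpha>) * \<beta> * cKJ + \<alpha> * \<beta>\<^sup>2 * cK * cJ)\<bar> \<le> 1 / P + 1 / P'
     + \<bar>(P' - 1) / P' * (1 - L / P - (L / P) * (H / (H + 1))) - (1 - \<alpha>)\<bar>
     + \<bar>(P' - 1) / P' * (2 * (L / P) * (H / (H + 1))) - \<alpha> * (H * \<beta>)\<bar>"
proof -
  define a where "a = (P' - 1) / P' * (1 - L / P - (L / P) * (H / (H + 1))) - (1 - \<alpha>)"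
  define b where "b = (P' - 1) / P' * (2 * (L / P) * (H / (H + 1))) - \<alpha> * (H * \<beta>)"
  define Y where "Y = (P' - 1) * (\<beta> / (P * P')) * S"
  have "L / P * (H / (H + 1)) = (m * H) * (H + 1) / (P * (H + 1))" unfolding L
      by (simp add: ac_simps)
  also have "\<dots> = m * H / P" using H by (intro mult_divide_mult_cancel_right) simp
  finally have L_H: "L / P * (H / (H + 1)) = m * H / P" .
  have a1: "a + (1 - \<alpha>) = (P' - 1) / P' * (1 - L / P - m * H / P)" unfolding a_def L_H by simp
  have b1: "b + \<alpha> * (H * \<beta>) = (P' - 1) / P' * (2 * (m * H / P))"
    unfolding b_def by (simp add: L_H[symmetric] mult.assoc)
  have "Y = \<beta> * cKJ * (a + (1 - \<alpha>)) + (\<beta> * cK * cJ / H) * (b + \<alpha> * (H * \<beta>))"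
    unfolding Y_def a1 b1 S using P P' H by (simp add: field_simps)
  then have "Y - ((1 - \<alpha>) * \<beta> * cKJ + \<alpha> * \<beta>\<^sup>2 * cK * cJ) = (\<beta> * cKJ) * a + (\<beta> * cK * (cJ / H)) * b"
    using H by (simp add: field_simps power2_eq_square)
  moreover have "\<bar>(\<beta> * cKJ) * a\<bar> \<le> \<bar>a\<bar>"
  proof -
    have "\<beta> * cKJ \<le> 1" using mult_left_mono[OF cKJ(2) \<beta>(1)] \<beta>(2) by (simp add: mult.commute)
    then show ?thesis using \<beta> cKJ by (simp add: abs_mult mult_left_le_one_le)
  qed
  moreover have "\<bar>(\<beta> * cK * (cJ / H)) * b\<bar> \<le> \<bar>b\<bar>"
  proof -
    have "\<beta> * cK * (cJ / H) \<le> 1"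
    proof (rule mult_le_one)
      show "\<beta> * cK \<le> 1" using mult_left_mono[OF cK(2) \<beta>(1)] \<beta>(2) by (simp add: mult.commute)
    qed (use cJ H in auto)
    moreover have "0 \<le> \<beta> * cK * (cJ / H)" using \<beta> cK cJ H by simp
    ultimately show ?thesis by (metis abs_mult abs_of_nonneg mult_left_le_one_le abs_ge_zero)
  qed
  ultimately have "\<bar>Y - ((1 - \<alpha>) * \<beta> * cKJ + \<alpha> * \<beta>\<^sup>2 * cK * cJ)\<bar> \<le> \<bar>a\<bar> + \<bar>b\<bar>"
    by linarith
  moreover have "\<bar>\<mu> - Y\<bar> \<le> 1 / P + 1 / P'"
    unfolding Y_def by (rule shift_sandwich[OF P P' \<beta> cK lo hi])
  ultimately show ?thesis unfolding a_def b_def by linarith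
qed

section \<open>The limit of the shifted correlations\<close>

locale rank_one_shift = rank_one_half_spacers M T Tinv p s B C
  for M :: "'a measure" and T Tinv p s B C +
  fixes \<alpha> :: real and l :: "nat \<Rightarrow> int"
  assumes p_over_h: "filterlim (\<lambda>n. real (p n) / real (rk1_height p s n)) at_top sequentially"
    and \<alpha>_pos: "0 < \<alpha>" and \<alpha>_lt_1: "\<alpha> < 1"
    and l_dvd: "\<And>n. (int (rk1_height p s n) + 1) dvd l n"
    and l_asymp: "(\<lambda>n. real_of_int (l n) - \<alpha> * real (p n) / 2) \<in> o(\<lambda>n. real (p n))"
begin

lemma h_ge_Suc: "h n \<ge> n + 1"
proof (induction n)
  case (Suc n)
  then show ?case using h_Suc_ge[of n] by simp
qed simp

lemma h_tendsto: "filterlim (\<lambda>n. real (h n)) at_top sequentially"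
proof (rule filterlim_at_top_mono[OF filterlim_real_sequentially])
  show "\<forall>\<^sub>F n in sequentially. real n \<le> real (h n)"
  proof (rule always_eventually, rule allI)
    fix n show "real n \<le> real (h n)" using h_ge_Suc[of n] by simp
  qed
qed

lemma p_tendsto: "filterlim (\<lambda>n. real (p n)) at_top sequentially"
proof (rule filterlim_at_top_mono[OF p_over_h])
  show "\<forall>\<^sub>F n in sequentially. real (p n) / real (h n) \<le> real (p n)"
  proof (rule always_eventually, rule allI)
    fix n
    have "real (h n) \<ge> 1" using h_ge_1[of n] by simp
    then show "real (p n) / real (h n) \<le> real (p n)"
        by (simp add: divide_le_eq) (simp add: mult_le_cancel_left1)
  qed
qed

lemma inverse_p_tendsto: "(\<lambda>n. 1 / real (p n)) \<longlonglongrightarrow> 0"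
  using tendsto_inverse_0_at_top[OF p_tendsto] by (simp add: inverse_eq_divide)

lemma inverse_p_Suc_tendsto: "(\<lambda>n. 1 / real (p (Suc n))) \<longlonglongrightarrow> 0"
  using inverse_p_tendsto by (rule LIMSEQ_Suc)

lemma l_over_p_tendsto: "(\<lambda>n. real_of_int (l n) / real (p n)) \<longlonglongrightarrow> \<alpha> / 2"
proof -
  have "(\<lambda>n. (real_of_int (l n) - \<alpha> * real (p n) / 2) / real (p n)) \<longlonglongrightarrow> 0"
    using smalloD_tendsto[OF l_asymp] .
  moreover have "(real_of_int (l n) - \<alpha> * real (p n) / 2) / real (p n)
      = real_of_int (l n) / real (p n) - \<alpha> / 2" for n
    using p_ge_2[of n] by (simp add: field_simps)
  ultimately have "(\<lambda>n. real_of_int (l n) / real (p n) - \<alpha> / 2) \<longlonglongrightarrow> 0" by simp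
  then show ?thesis by (simp add: LIM_zero_iff)
qed

lemma h_over_h_plus_1_tendsto: "(\<lambda>n. real (h n) / (real (h n) + 1)) \<longlonglongrightarrow> 1"
proof -
  have f: "filterlim (\<lambda>n. real (h n) + 1) at_top sequentially"
    by (rule filterlim_at_top_mono[OF h_tendsto]) simp
  have "(\<lambda>n. 1 - 1 / (real (h n) + 1)) \<longlonglongrightarrow> 1 - 0"
    using tendsto_inverse_0_at_top[OF f]
    by (intro tendsto_diff tendsto_const) (simp add: inverse_eq_divide)
  moreover have "1 - 1 / (real (h n) + 1) = real (h n) / (real (h n) + 1)" for n
    by (simp add: field_simps)
  ultimately show ?thesis by simp
qed

lemma tower_measure_tendsto: "(\<lambda>n. real (h n) * \<beta> n) \<longlonglongrightarrow> 1"
proof (rule metric_LIMSEQ_I)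
  fix r :: real assume r: "r > 0"
  obtain n0 F where F: "F \<subseteq> {..<h n0}" "measure M (sym_diff (space M) (\<Union>k\<in>F. level n0 k)) < r"
    using levels_approx[OF sets.top r] unfolding level_def by blast
  have fF: "finite F" using F finite_subset by blast
  have "sym_diff (space M) (\<Union>k\<in>F. level n0 k) = space M - (\<Union>k\<in>F. level n0 k)"
    using level_subset_space by blast
  then have "measure M (space M - (\<Union>k\<in>F. level n0 k)) < r" using F(2) by simp
  then have "1 - measure M (\<Union>k\<in>F. level n0 k) < r" using prob_compl[OF sets_Union_levels[OF fF]]
      by simp
  moreover have "measure M (\<Union>k\<in>F. level n0 k) = card F * \<beta> n0"
      by (rule measure_Union_levels[OF F(1)])
  moreover have "card F \<le> h n0" using card_mono[OF _ F(1)] by simp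
  ultimately have "1 - r < h n0 * \<beta> n0" using \<beta>_nonneg[of n0]
    by (smt (verit) mult_right_mono of_nat_le_iff)
  have "\<forall>n\<ge>n0. dist (real (h n) * \<beta> n) 1 < r"
  proof (intro allI impI)
    fix n assume "n0 \<le> n"
    then have "h n0 * \<beta> n0 \<le> h n * \<beta> n"
      using lift_Suc_mono_le[of "\<lambda>n. real (h n) * \<beta> n", OF tower_measure_mono] by blast
    then show "dist (real (h n) * \<beta> n) 1 < r" using \<open>1 - r < h n0 * \<beta> n0\<close> tower_measure_le_1[of n] r
      by (simp add: dist_real_def)
  qed
  then show "\<exists>n0. \<forall>n\<ge>n0. dist (real (h n) * \<beta> n) 1 < r" by blast
qed

definition err :: "nat \<Rightarrow> real" where
  "err n = 1 / real (p n) + 1 / real (p (Suc n))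
   + \<bar>(real (p (Suc n)) - 1) / real (p (Suc n)) * (1 - real_of_int (l n) / real (p n)
       - real_of_int (l n) / real (p n) * (real (h n) / (real (h n) + 1))) - (1 - \<alpha>)\<bar>
   + \<bar>(real (p (Suc n)) - 1) / real (p (Suc n)) * (2 * (real_of_int (l n) / real (p n))
       * (real (h n) / (real (h n) + 1))) - \<alpha> * (real (h n) * \<beta> n)\<bar>"

lemma err_tendsto: "err \<longlonglongrightarrow> 0"
proof -
  have pp: "(\<lambda>n. (real (p (Suc n)) - 1) / real (p (Suc n))) \<longlonglongrightarrow> 1"
  proof -
    have "(\<lambda>n. 1 - 1 / real (p (Suc n))) \<longlonglongrightarrow> 1 - 0" by (intro tendsto_intros inverse_p_Suc_tendsto)
    moreover have "1 - 1 / real (p (Suc n)) = (real (p (Suc n)) - 1) / real (p (Suc n))" for n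
      using p_ge_2[of "Suc n"] by (simp add: field_simps)
    ultimately show ?thesis by simp
  qed
  have a: "(\<lambda>n. (real (p (Suc n)) - 1) / real (p (Suc n)) * (1 - real_of_int (l n) / real (p n)
       - real_of_int (l n) / real (p n) * (real (h n) / (real (h n) + 1))) - (1 - \<alpha>)) \<longlonglongrightarrow>
      1 * (1 - \<alpha> / 2 - \<alpha> / 2 * 1) - (1 - \<alpha>)"
    by (intro tendsto_intros pp l_over_p_tendsto h_over_h_plus_1_tendsto)
  have b: "(\<lambda>n. (real (p (Suc n)) - 1) / real (p (Suc n)) * (2 * (real_of_int (l n) / real (p n))
       * (real (h n) / (real (h n) + 1))) - \<alpha> * (real (h n) * \<beta> n)) \<longlonglongrightarrow>
      1 * (2 * (\<alpha> / 2) * 1) - \<alpha> * 1"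
    by (intro tendsto_intros pp l_over_p_tendsto h_over_h_plus_1_tendsto tower_measure_tendsto)
  have "err \<longlonglongrightarrow> 0 + 0 + \<bar>1 * (1 - \<alpha> / 2 - \<alpha> / 2 * 1) - (1 - \<alpha>)\<bar> + \<bar>1 * (2 * (\<alpha> / 2) * 1) - \<alpha> * 1\<bar>"
    unfolding err_def[abs_def] by (intro tendsto_intros inverse_p_tendsto inverse_p_Suc_tendsto a b)
  then show ?thesis by simp
qed

lemma \<beta>_Suc_Suc: "\<beta> (Suc (Suc n)) = \<beta> n / (real (p n) * real (p (Suc n)))"
  using \<beta>_Suc[of n] \<beta>_Suc[of "Suc n"] p_ge_2[of n] p_ge_2[of "Suc n"] by (simp add: field_simps)

lemma l_eq_multiple:
  assumes "0 \<le> l n"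
  obtains m where "l n = int (m * (h n + 1))"
proof -
  obtain c where c: "l n = (int (h n) + 1) * c" using l_dvd by (meson dvdE)
  then have "c \<ge> 0" using assms by (simp add: zero_le_mult_iff)
  then have "l n = int (nat c * (h n + 1))" using c by (simp add: algebra_simps)
  then show thesis by (rule that)
qed

lemma measure_shift_levels_approx:
  assumes ln: "0 \<le> l n" and lq: "l n \<le> int (q n)" and K: "K \<subseteq> {..<h n}" and J: "J \<subseteq> {..<h n}"
  shows "\<bar>measure M ((T ^^ (nat (l n) * h n)) ` (\<Union>k\<in>K. level n k) \<inter> (\<Union>k\<in>J. level n k))
     - ((1 - \<alpha>) * \<beta> n * card (K \<inter> J) + \<alpha> * (\<beta> n)\<^sup>2 * card K * card J)\<bar> \<le> err n"
proof -
  obtain m where li: "l n = int (m * (h n + 1))" using l_eq_multiple[OF ln] .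
  then have lm: "nat (l n) = m * (h n + 1)" by (simp only: nat_int)
  have lq': "m * (h n + 1) \<le> q n" using lq ln lm by linarith
  let ?A = "(q n - m * (h n + 1)) + (q n - m * h n)"
  let ?S = "real (card (K \<inter> J) * ?A + card K * (2 * m * card J))"
  let ?\<mu> = "measure M ((T ^^ (m * (h n + 1) * h n)) ` (\<Union>k\<in>K. level n k) \<inter> (\<Union>k\<in>J. level n k))"
  have cb: "(p (Suc n) - 1) * \<beta> (Suc (Suc n)) * (?S - card K) \<le> ?\<mu>"
     "?\<mu> \<le> (p (Suc n) - 1) * \<beta> (Suc (Suc n)) * ?S + p n * \<beta> (Suc (Suc n)) * card K"
    using measure_shift_bounds[OF K J lq'] by simp_all
  have mh: "m * h n \<le> q n" using lq' by (simp add: algebra_simps)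
  have Lr: "real_of_int (l n) = real m * (real (h n) + 1)"
    using li by (simp add: algebra_simps)
  have Areal: "real ?A = real (p n) - real_of_int (l n) - real m * real (h n)"
    using lq' mh p_eq_2q[of n] unfolding Lr by (simp add: of_nat_diff algebra_simps)
  have p'r: "real (p (Suc n) - 1) = real (p (Suc n)) - 1" using p_ge_2[of "Suc n"] by simp
  have fK: "finite K" using K finite_subset by blast
  have "\<bar>?\<mu> - ((1 - \<alpha>) * \<beta> n * card (K \<inter> J) + \<alpha> * (\<beta> n)\<^sup>2 * card K * card J)\<bar> \<le> err n"
    unfolding err_def
  proof (rule shift_estimate[where m = "real m"])
    show "1 \<le> real (p n)" "1 \<le> real (p (Suc n))" using p_ge_2[of n] p_ge_2[of "Suc n"] by simp_all
    show "1 \<le> real (h n)" using h_ge_1[of n] by simp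
    show "0 \<le> \<beta> n" "real (h n) * \<beta> n \<le> 1" using \<beta>_nonneg tower_measure_le_1 by auto
    show "real_of_int (l n) = real m * (real (h n) + 1)" by (rule Lr)
    show "0 \<le> real (card K)" "real (card K) \<le> real (h n)" using card_mono[OF _ K] by auto
    show "0 \<le> real (card (K \<inter> J))" "real (card (K \<inter> J)) \<le> real (h n)"
      using card_mono[OF _ Int_lower1, of K J] card_mono[OF _ K] fK by auto
    show "0 \<le> real (card J)" "real (card J) \<le> real (h n)" using card_mono[OF _ J] by auto
    show "?S = real (card (K \<inter> J)) * (real (p n) - real_of_int (l n) - real m * real (h n))
        + real (card K) * (2 * real m * real (card J))"
      using Areal by simp
    show "(real (p (Suc n)) - 1) * (\<beta> n / (real (p n) * real (p (Suc n)))) *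
        (?S - real (card K)) \<le> ?\<mu>"
      using cb(1) unfolding \<beta>_Suc_Suc p'r by simp
    show "?\<mu> \<le> (real (p (Suc n)) - 1) * (\<beta> n / (real (p n) * real (p (Suc n)))) * ?S
        + real (p n) * (\<beta> n / (real (p n) * real (p (Suc n)))) * real (card K)"
      using cb(2) unfolding \<beta>_Suc_Suc p'r by simp
  qed
  then show ?thesis using lm by (simp add: mult.assoc)
qed

end

sublocale rank_one_shift \<subseteq> correlation_limit M "\<lambda>n. ipow T Tinv (- (l n * int (h n)))" \<alpha>
  by unfold_locales (use measure_preserving_ipow \<alpha>_pos \<alpha>_lt_1 in auto)

context rank_one_shift
begin

lemma eventually_l_bounded: "eventually (\<lambda>n. 0 < l n \<and> l n \<le> int (q n)) sequentially"
proof -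
  have "eventually (\<lambda>n. real_of_int (l n) / real (p n) > 0) sequentially"
    using order_tendstoD(1)[OF l_over_p_tendsto] \<alpha>_pos by simp
  moreover have "eventually (\<lambda>n. real_of_int (l n) / real (p n) < 1 / 2) sequentially"
    using order_tendstoD(2)[OF l_over_p_tendsto, of "1 / 2"] \<alpha>_lt_1 by simp
  ultimately show ?thesis
  proof eventually_elim
    case (elim n)
    have pp: "real (p n) > 0" using p_ge_2[of n] by simp
    have "real_of_int (l n) > 0" using elim(1) pp by (simp add: zero_less_divide_iff)
    moreover have "real_of_int (l n) < real (p n) / 2" using elim(2) pp
        by (simp add: divide_less_eq)
    moreover have "real (p n) / 2 = real (q n)" using p_eq_2q[of n] by simp
    ultimately show "0 < l n \<and> l n \<le> int (q n)" by linarith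
  qed
qed

lemma overlap_eq_measure_image:
  assumes "0 < l n" and "E \<subseteq> space M"
  shows "overlap n E F = measure M ((T ^^ (nat (l n) * h n)) ` E \<inter> F)"
proof -
  have "0 < l n * int (h n)" using assms(1) h_ge_1[of n] by simp
  then have "ipow T Tinv (- (l n * int (h n))) = Tinv ^^ (nat (l n) * h n)"
    unfolding ipow_def using assms(1) by (simp add: nat_mult_distrib)
  then show ?thesis
    unfolding overlap_def using image_funpow_T[OF assms(2)] by (simp add: Collect_conj_eq Int_assoc)
qed

lemma limit_overlap_levels:
  assumes K: "K \<subseteq> {..<h n}" and J: "J \<subseteq> {..<h n}"
  shows "limit_overlap (\<Union>k\<in>K. level n k) (\<Union>k\<in>J. level n k)
    = (1 - \<alpha>) * \<beta> n * card (K \<inter> J) + \<alpha> * (\<beta> n)\<^sup>2 * card K * card J"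
proof -
  have "K \<inter> J \<subseteq> {..<h n}" using K by auto
  then show ?thesis
    unfolding limit_overlap_def Union_levels_Int[OF K J] measure_Union_levels[OF K]
      measure_Union_levels[OF J] measure_Union_levels[OF \<open>K \<inter> J \<subseteq> {..<h n}\<close>]
    by (simp add: power2_eq_square algebra_simps)
qed

lemma overlap_levels_tendsto:
  assumes K0: "K0 \<subseteq> {..<h n0}" and J0: "J0 \<subseteq> {..<h n1}"
  defines "E \<equiv> \<Union>k\<in>K0. level n0 k" and "F \<equiv> \<Union>k\<in>J0. level n1 k"
  shows "(\<lambda>n. overlap n E F) \<longlonglongrightarrow> limit_overlap E F"
proof -
  have "eventually (\<lambda>n. norm (overlap n E F - limit_overlap E F) \<le> err n) sequentially"
    using eventually_l_bounded eventually_ge_at_top[of "max n0 n1"]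
  proof eventually_elim
    case (elim n)
    obtain K where K: "K \<subseteq> {..<h n}" "E = (\<Union>k\<in>K. level n k)"
      using Union_levels_refine[OF _ K0, of n] elim(2) unfolding E_def by auto
    obtain J where J: "J \<subseteq> {..<h n}" "F = (\<Union>k\<in>J. level n k)"
      using Union_levels_refine[OF _ J0, of n] elim(2) unfolding F_def by auto
    have "E \<subseteq> space M" using K(2) level_subset_space by blast
    then have "overlap n E F = measure M ((T ^^ (nat (l n) * h n)) ` E \<inter> F)"
      using elim(1) by (intro overlap_eq_measure_image) auto
    then show ?case
      using measure_shift_levels_approx[OF less_imp_le[OF conjunct1[OF elim(1)]] conjunct2[OF
          elim(1)] K(1) J(1)]
        limit_overlap_levels[OF K(1) J(1)] unfolding K(2) J(2) by simp
  qed
  then have "(\<lambda>n. overlap n E F - limit_overlap E F) \<longlonglongrightarrow> 0"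
    by (rule Lim_null_comparison[OF _ err_tendsto])
  then show ?thesis by (simp add: LIM_zero_iff)
qed

lemma overlap_tendsto:
  assumes E: "E \<in> sets M" and F: "F \<in> sets M"
  shows "(\<lambda>n. overlap n E F) \<longlonglongrightarrow> limit_overlap E F"
proof (rule overlap_tendsto_approx[OF E F])
  fix e :: real assume e: "e > 0"
  obtain n0 K0 where K0: "K0 \<subseteq> {..<h n0}"
    "measure M (sym_diff E (\<Union>k\<in>K0. (T ^^ k) ` B n0)) < e"
    using levels_approx[OF E e] by blast
  obtain n1 J0 where J0: "J0 \<subseteq> {..<h n1}"
    "measure M (sym_diff F (\<Union>k\<in>J0. (T ^^ k) ` B n1)) < e"
    using levels_approx[OF F e] by blast
  have fin: "finite K0" "finite J0" using K0(1) J0(1) finite_subset by blast+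
  show "\<exists>E' F'. E' \<in> sets M \<and> F' \<in> sets M \<and> measure M (sym_diff E E')
      < e \<and> measure M (sym_diff F F') < e
      \<and> (\<lambda>n. overlap n E' F') \<longlonglongrightarrow> limit_overlap E' F'"
    using K0(2) J0(2) overlap_levels_tendsto[OF K0(1) J0(1)] sets_Union_levels[OF fin(1)]
      sets_Union_levels[OF fin(2)] unfolding level_def by blast
qed

theorem correlation_tendsto_rank_one:
  assumes f: "square_integrable M f" and g: "square_integrable M g"
  shows "(\<lambda>n. \<integral>x. f (ipow T Tinv (- (l n * int (rk1_height p s n))) x) * cnj (g x) \<partial>M)
       \<longlonglongrightarrow> complex_of_real \<alpha> * ((\<integral>x. f x \<partial>M) * cnj (\<integral>x. g x \<partial>M))
           + complex_of_real (1 - \<alpha>) * (\<integral>x. f x * cnj (g x) \<partial>M)"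
  using correlation_tendsto[OF overlap_tendsto f g]
      unfolding correlation_def limit_correlation_def .

end

theorem mainTheorem13:
  fixes M :: "'a measure" and T Tinv :: "'a \<Rightarrow> 'a"
    and p :: "nat \<Rightarrow> nat" and s :: "nat \<Rightarrow> nat \<Rightarrow> nat"
    and B :: "nat \<Rightarrow> 'a set" and C :: "nat \<Rightarrow> nat \<Rightarrow> 'a set"
    and \<alpha> :: real and l :: "nat \<Rightarrow> int"
  assumes sys: "rank_one_system M T Tinv p s B C"
    and p_even: "\<forall>n. even (p n)"
    and s_def: "\<forall>n j. j < p n \<longrightarrow> s n j = (if j < p n div 2 then 0 else 1)"
    and p_h: "filterlim (\<lambda>n. real (p n) / real (rk1_height p s n)) at_top sequentially"
    and \<alpha>_pos: "0 < \<alpha>" and \<alpha>_lt1: "\<alpha> < 1"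
    and l_dvd: "\<forall>n. (int (rk1_height p s n) + 1) dvd l n"
    and l_asymp: "(\<lambda>n. real_of_int (l n) - \<alpha> * real (p n) / 2) \<in> o(\<lambda>n. real (p n))"
  shows "\<forall>f g. square_integrable M f \<longrightarrow> square_integrable M g \<longrightarrow>
     (\<lambda>n. \<integral>x. f (ipow T Tinv (- (l n * int (rk1_height p s n))) x) * cnj (g x) \<partial>M)
       \<longlonglongrightarrow> complex_of_real \<alpha> * ((\<integral>x. f x \<partial>M) * cnj (\<integral>x. g x \<partial>M))
           + complex_of_real (1 - \<alpha>) * (\<integral>x. f x * cnj (g x) \<partial>M)"
proof -
  interpret rank_one M T Tinv p s B C by (rule rank_one_systemD[OF sys])
  interpret rank_one_shift M T Tinv p s B C \<alpha> l
    by unfold_locales (use p_even s_def p_h \<alpha>_pos \<alpha>_lt1 l_dvd l_asymp in auto)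
  show ?thesis using correlation_tendsto_rank_one by blast
qed

end
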